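(* For all $\phi,\psi\in\mathfrak M$, $$\lim_{\varepsilon\to0}\mathfrak t_\varepsilon[\psi,\phi]=\mathfrak t_{\rm AB}[\psi,\phi].$$
   Context: Work in $L^2(\mathbb{R})$ with $(f,g)=\int\overline{f}g\,dx$; $q$ is multiplication by $x$, $p=-i\,d/dx$, $t=q^{-1}p$ with $D(t)=\{f\in D(p):pf\in D(q^{-1})\}$, $t^*$ its adjoint; $L^2_0$, $L^2_1$ the even/odd subspaces. For $0<\varepsilon\le1$ define $S_\varepsilon$ in $L^2_0$ by $D(S_\varepsilon)=\{f\in L^2_0\cap\bigcap_nD(t^{2n+1}):\sum_{n=0}^N\frac{(-1)^n}{2n+1}(\sqrt\varepsilon t)^{2n+1}f$ converges in norm$\}$, $S_\varepsilon f=-\varepsilon^{-1/2}\sum_{n\ge0}\frac{(-1)^n}{2n+1}(\sqrt\varepsilon t)^{2n+1}f$, and $S^*_\varepsilon$ (notation only) in $L^2_1$ by the same formulas with $t^*$ and $L^2_1$. Let $\mathfrak M_0$ be the span of $\{x^{2n}e^{-\alpha x^2/2}:n\ge0,\alpha\in(0,1)\}$, $\mathfrak M_1$ the span of $\{x^{2n+1}e^{-\alpha x^2/2}:n\ge0,\alpha\in(0,1)\}$, and $\mathfrak M=\mathfrak M_0\oplus\mathfrak M_1$ (one has $\mathfrak M_0\subset D(S_\varepsilon)\cap D(t)$ and $\mathfrak M_1\subset D(S^*_\varepsilon)\cap D(t^* )$ for all $0<\varepsilon\le1$). For $\psi=\psi_0\oplus\psi_1$, $\phi=\phi_0\oplus\phi_1\in\mathfrak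 M$ set $\mathfrak t_\varepsilon[\psi,\phi]=\frac12((\psi_0,S_\varepsilon\phi_0)+(S_\varepsilon\psi_0,\phi_0))+\frac12((\psi_1,S^*_\varepsilon\phi_1)+(S^*_\varepsilon\psi_1,\phi_1))$ and $\mathfrak t_{\rm AB}[\psi,\phi]=-\frac12((\psi_0,t\phi_0)+(t\psi_0,\phi_0))-\frac12((\psi_1,t^*\phi_1)+(t^*\psi_1,\phi_1))$. *)

theory Defs
  imports "HOL-Analysis.Analysis"
begin

text \<open>Elements of L2(R) are represented by measurable functions real => complex;
  operators are represented by their graphs as relations between representatives
  (values determined up to equality almost everywhere).\<close>

type_synonym fn = "real \<Rightarrow> complex"

definition L2 :: "fn \<Rightarrow> bool" where
  "L2 f \<longleftrightarrow> f \<in> borel_measurable lborel \<and> integrable lborel (\<lambda>x. (cmod (f x))\<^sup>2)"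

definition l2_inner :: "fn \<Rightarrow> fn \<Rightarrow> complex" where
  "l2_inner f g = (LINT x|lborel. cnj (f x) * g x)"

definition l2_norm :: "fn \<Rightarrow> real" where
  "l2_norm f = sqrt (LINT x|lborel. (cmod (f x))\<^sup>2)"

definition ae_eq :: "fn \<Rightarrow> fn \<Rightarrow> bool" where
  "ae_eq f g \<longleftrightarrow> (AE x in lborel. f x = g x)"

definition L2_even :: "fn \<Rightarrow> bool" where
  "L2_even f \<longleftrightarrow> L2 f \<and> (AE x in lborel. f (- x) = f x)"

definition L2_odd :: "fn \<Rightarrow> bool" where
  "L2_odd f \<longleftrightarrow> L2 f \<and> (AE x in lborel. f (- x) = - f x)"

definition test_fun :: "fn \<Rightarrow> bool" where
  "test_fun \<phi> \<longleftrightarrow> (\<exists>D :: nat \<Rightarrow> fn. D 0 = \<phi> \<and>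
      (\<forall>k x. (D k has_vector_derivative D (Suc k) x) (at x))) \<and>
    (\<exists>R. \<forall>x. \<bar>x\<bar> > R \<longrightarrow> \<phi> x = 0)"

definition weak_deriv :: "fn \<Rightarrow> fn \<Rightarrow> bool" where
  "weak_deriv f g \<longleftrightarrow> L2 f \<and> L2 g \<and>
     (\<forall>\<phi>. test_fun \<phi> \<longrightarrow>
        (LINT x|lborel. f x * vector_derivative \<phi> (at x)) = - (LINT x|lborel. g x * \<phi> x))"

text \<open>Momentum p = -i d/dx on its self-adjoint domain H^1.\<close>
definition p_rel :: "fn \<Rightarrow> fn \<Rightarrow> bool" where
  "p_rel f h \<longleftrightarrow> L2 h \<and> (\<exists>g. weak_deriv f g \<and> (AE x in lborel. h x = - \<i> * g x))"

definition qinv_rel :: "fn \<Rightarrow> fn \<Rightarrow> bool" where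
  "qinv_rel f h \<longleftrightarrow> L2 f \<and> L2 h \<and> (AE x in lborel. h x = f x / of_real x)"

definition t_rel :: "fn \<Rightarrow> fn \<Rightarrow> bool" where
  "t_rel f h \<longleftrightarrow> (\<exists>g. p_rel f g \<and> qinv_rel g h)"

definition tadj_rel :: "fn \<Rightarrow> fn \<Rightarrow> bool" where
  "tadj_rel g h \<longleftrightarrow> L2 g \<and> L2 h \<and>
     (\<forall>f k. t_rel f k \<longrightarrow> l2_inner g k = l2_inner h f)"

fun rel_pow :: "(fn \<Rightarrow> fn \<Rightarrow> bool) \<Rightarrow> nat \<Rightarrow> fn \<Rightarrow> fn \<Rightarrow> bool" where
  "rel_pow A 0 f h \<longleftrightarrow> L2 f \<and> L2 h \<and> ae_eq f h"
| "rel_pow A (Suc n) f h \<longleftrightarrow> (\<exists>m. A f m \<and> rel_pow A n m h)"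

definition S_rel :: "(fn \<Rightarrow> fn \<Rightarrow> bool) \<Rightarrow> (fn \<Rightarrow> bool) \<Rightarrow> real \<Rightarrow> fn \<Rightarrow> fn \<Rightarrow> bool" where
  "S_rel A P \<epsilon> f g \<longleftrightarrow> P f \<and>
     (\<exists>u s. (\<forall>n. rel_pow A (2*n+1) f (u n)) \<and> L2 s \<and>
        (\<lambda>N. l2_norm (\<lambda>x. (\<Sum>n\<le>N. of_real ((-1)^n / real (2*n+1) * (sqrt \<epsilon>)^(2*n+1)) * u n x) - s x))
          \<longlonglongrightarrow> 0 \<and>
        L2 g \<and> (AE x in lborel. g x = - of_real (1 / sqrt \<epsilon>) * s x))"

definition S_op :: "real \<Rightarrow> fn \<Rightarrow> fn" where
  "S_op \<epsilon> f = (SOME g. S_rel t_rel L2_even \<epsilon> f g)"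

definition Sadj_op :: "real \<Rightarrow> fn \<Rightarrow> fn" where
  "Sadj_op \<epsilon> f = (SOME g. S_rel tadj_rel L2_odd \<epsilon> f g)"

definition t_op :: "fn \<Rightarrow> fn" where
  "t_op f = (SOME h. t_rel f h)"

definition tadj_op :: "fn \<Rightarrow> fn" where
  "tadj_op f = (SOME h. tadj_rel f h)"

definition M0 :: "fn set" where
  "M0 = {f. \<exists>F (c :: nat \<times> real \<Rightarrow> complex). finite F \<and> (\<forall>(n,a)\<in>F. 0 < a \<and> a < 1) \<and>
      f = (\<lambda>x. \<Sum>(n,a)\<in>F. c (n,a) * of_real (x^(2*n) * exp (- a * x\<^sup>2 / 2)))}"

definition M1 :: "fn set" where
  "M1 = {f. \<exists>F (c :: nat \<times> real \<Rightarrow> complex). finite F \<and> (\<forall>(n,a)\<in>F. 0 < a \<and> a < 1) \<and>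
      f = (\<lambda>x. \<Sum>(n,a)\<in>F. c (n,a) * of_real (x^(2*n+1) * exp (- a * x\<^sup>2 / 2)))}"

text \<open>Forms on M = M_0 (+) M_1; psi = psi0 (+) psi1, phi = phi0 (+) phi1.\<close>
definition t_eps :: "real \<Rightarrow> fn \<Rightarrow> fn \<Rightarrow> fn \<Rightarrow> fn \<Rightarrow> complex" where
  "t_eps \<epsilon> \<psi>0 \<psi>1 \<phi>0 \<phi>1 =
     (l2_inner \<psi>0 (S_op \<epsilon> \<phi>0) + l2_inner (S_op \<epsilon> \<psi>0) \<phi>0) / 2 +
     (l2_inner \<psi>1 (Sadj_op \<epsilon> \<phi>1) + l2_inner (Sadj_op \<epsilon> \<psi>1) \<phi>1) / 2"

definition t_AB :: "fn \<Rightarrow> fn \<Rightarrow> fn \<Rightarrow> fn \<Rightarrow> complex" where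
  "t_AB \<psi>0 \<psi>1 \<phi>0 \<phi>1 =
     - (l2_inner \<psi>0 (t_op \<phi>0) + l2_inner (t_op \<psi>0) \<phi>0) / 2
     - (l2_inner \<psi>1 (tadj_op \<phi>1) + l2_inner (tadj_op \<psi>1) \<phi>1) / 2"

end

(* On the functions x^(2k+p) exp(-a x^2/2) the operator t = q^-1 p = -2i d/d(x^2) acts on the
   coefficients by a finite upper bidiagonal matrix T, and on odd functions t^* (x g) = x (t g)
   gives t^* the same matrix. Powers of T grow at most geometrically, so for small eps the series
   defining S_eps converges coefficientwise, hence in L^2, and S_eps phi is again such a combination,
   with coefficients -eps^(-1/2) arctan(sqrt eps T) applied to those of phi. As
   eps^(-1/2) arctan(sqrt eps s) = s + O(eps), these coefficients tend to -T, and every inner product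
   in the forms is a finite linear combination of coefficients.
   The analytic work is identifying t, t^* and S_eps, which are defined through weak derivatives,
   adjoints and choice. Weak derivatives and t^* are unique by the fundamental lemma of the calculus
   of variations, applied with test functions vanishing near 0, which lie in the domain of t. *)

theory Submission
  imports Defs "HOL-Computational_Algebra.Polynomial" "HOL-Probability.Probability"
begin

section \<open>Smooth functions\<close>

definition smooth :: "fn \<Rightarrow> bool" where
  "smooth f \<longleftrightarrow> (\<exists>D::nat \<Rightarrow> fn. D 0 = f \<and> (\<forall>k x. (D k has_vector_derivative D (Suc k) x) (at x)))"

lemma test_fun_iff_smooth: "test_fun \<phi> \<longleftrightarrow> smooth \<phi> \<and> (\<exists>R. \<forall>x. \<bar>x\<bar> > R \<longrightarrow> \<phi> x = 0)"
  by (simp add: test_fun_def smooth_def)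

lemma smooth_coinduct:
  assumes "P f" and step: "\<And>g. P g \<Longrightarrow> \<exists>g'. (\<forall>x. (g has_vector_derivative g' x) (at x)) \<and> P g'"
  shows "smooth f"
proof -
  define next_deriv where "next_deriv g = (SOME g'. (\<forall>x. (g has_vector_derivative g' x) (at x)) \<and> P g')" for g
  have next_deriv: "P g \<Longrightarrow> (\<forall>x. (g has_vector_derivative next_deriv g x) (at x)) \<and> P (next_deriv g)" for g
    unfolding next_deriv_def using someI_ex[OF step] by blast
  define D where "D k = (next_deriv ^^ k) f" for k
  have P: "P (D k)" for k by (induction k) (auto simp: D_def next_deriv assms(1))
  have "\<forall>k x. (D k has_vector_derivative D (Suc k) x) (at x)"
    using next_deriv[OF P] by (simp add: D_def)
  then show ?thesis unfolding smooth_def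
    by (intro exI[of _ D]) (simp add: D_def)
qed

lemma smooth_has_vector_derivative:
  assumes "smooth f"
  obtains f' where "\<And>x. (f has_vector_derivative f' x) (at x)" "smooth f'"
proof -
  obtain D where D: "D 0 = f" "\<And>k x. (D k has_vector_derivative D (Suc k) x) (at x)"
    using assms unfolding smooth_def by blast
  have "smooth (D 1)"
    unfolding smooth_def using D(2) by (intro exI[of _ "\<lambda>k. D (Suc k)"]) auto
  then show ?thesis
    by (rule that[of "D 1", rotated]) (use D in auto)
qed

lemma smooth_vector_derivative:
  assumes "smooth f"
  shows "(f has_vector_derivative vector_derivative f (at x)) (at x)"
    and "smooth (\<lambda>x. vector_derivative f (at x))"
proof -
  obtain f' where f': "\<And>x. (f has_vector_derivative f' x) (at x)" "smooth f'"
    using smooth_has_vector_derivative[OF assms] by blast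
  have vd: "vector_derivative f (at x) = f' x" for x
    by (rule vector_derivative_at[OF f'(1)])
  show "(f has_vector_derivative vector_derivative f (at x)) (at x)"
    unfolding vd by (rule f'(1))
  show "smooth (\<lambda>x. vector_derivative f (at x))"
    unfolding vd using f'(2) by (simp add: eta_contract_eq)
qed

lemma smooth_derivative:
  assumes "smooth f" "\<And>x. (f has_vector_derivative f' x) (at x)"
  shows "smooth f'"
proof -
  have "(\<lambda>x. vector_derivative f (at x)) = f'"
    by (rule ext) (rule vector_derivative_at[OF assms(2)])
  with smooth_vector_derivative(2)[OF assms(1)] show ?thesis by simp
qed

lemma smooth_continuous_on: "smooth f \<Longrightarrow> continuous_on UNIV f"
  by (rule continuous_on_vector_derivative) (rule has_vector_derivative_at_within, rule smooth_vector_derivative(1))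

lemma smooth_borel_measurable: "smooth f \<Longrightarrow> f \<in> borel_measurable borel"
  using smooth_continuous_on borel_measurable_continuous_onI by blast

lemma smooth_const: "smooth (\<lambda>x. c)"
  by (rule smooth_coinduct[where P="\<lambda>g. \<exists>c. g = (\<lambda>x. c)"]) (auto intro!: exI[of _ "\<lambda>x. 0"])

lemma smooth_add: assumes "smooth f" "smooth g" shows "smooth (\<lambda>x. f x + g x)"
proof (rule smooth_coinduct[where P="\<lambda>h. \<exists>f g. smooth f \<and> smooth g \<and> h = (\<lambda>x. f x + g x)"])
  fix h assume "\<exists>f g. smooth f \<and> smooth g \<and> h = (\<lambda>x. f x + g x)"
  then obtain f g where fg: "smooth f" "smooth g" "h = (\<lambda>x. f x + g x)" by blast
  let ?f' = "\<lambda>x. vector_derivative f (at x)" and ?g' = "\<lambda>x. vector_derivative g (at x)"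
  have "(h has_vector_derivative ?f' x + ?g' x) (at x)" for x
    unfolding fg(3) by (intro has_vector_derivative_add smooth_vector_derivative(1) fg)
  then show "\<exists>h'. (\<forall>x. (h has_vector_derivative h' x) (at x)) \<and> (\<exists>f g. smooth f \<and> smooth g \<and> h' = (\<lambda>x. f x + g x))"
    using smooth_vector_derivative(2)[OF fg(1)] smooth_vector_derivative(2)[OF fg(2)]
    by (intro exI[of _ "\<lambda>x. ?f' x + ?g' x"] exI[of _ ?f'] exI[of _ ?g'] conjI allI) auto
qed (use assms in blast)

text \<open>Products are handled by closing under finite sums of products: the Leibniz rule maps
  such a sum to another one.\<close>

lemma has_vector_derivative_sum_list_mult:
  assumes "\<forall>(f,g)\<in>set L. smooth f \<and> smooth g"
  shows "((\<lambda>x. \<Sum>(f,g)\<leftarrow>L. f x * g x) has_vector_derivative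
           (\<Sum>(f,g)\<leftarrow>concat (map (\<lambda>(f,g). [(\<lambda>x. vector_derivative f (at x), g),
              (f, \<lambda>x. vector_derivative g (at x))]) L). f x * g x)) (at x)"
  using assms
proof (induction L)
  case (Cons fg L)
  obtain f g where fg: "fg = (f,g)" by fastforce
  have "smooth f" "smooth g" using Cons.prems fg by auto
  then show ?case
    using Cons.IH Cons.prems smooth_vector_derivative(1)[of f x] smooth_vector_derivative(1)[of g x]
    unfolding fg by (auto intro!: derivative_eq_intros simp: algebra_simps)
qed simp

lemma smooth_mult: assumes "smooth f" "smooth g" shows "smooth (\<lambda>x. f x * g x)"
proof (rule smooth_coinduct[where P="\<lambda>h. \<exists>L. (\<forall>(f,g)\<in>set L. smooth f \<and> smooth g) \<and> h = (\<lambda>x. \<Sum>(f,g)\<leftarrow>L. f x * g x)"])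
  show "\<exists>L. (\<forall>(f,g)\<in>set L. smooth f \<and> smooth g) \<and> (\<lambda>x. f x * g x) = (\<lambda>x. \<Sum>(f,g)\<leftarrow>L. f x * g x)"
    using assms by (intro exI[of _ "[(f,g)]"]) auto
next
  fix h assume "\<exists>L. (\<forall>(f,g)\<in>set L. smooth f \<and> smooth g) \<and> h = (\<lambda>x. \<Sum>(f,g)\<leftarrow>L. f x * g x)"
  then obtain L where L: "\<forall>(f,g)\<in>set L. smooth f \<and> smooth g" "h = (\<lambda>x. \<Sum>(f,g)\<leftarrow>L. f x * g x)" by blast
  let ?L = "concat (map (\<lambda>(f,g). [(\<lambda>x. vector_derivative f (at x), g), (f, \<lambda>x. vector_derivative g (at x))]) L)"
  have "\<forall>(f,g)\<in>set ?L. smooth f \<and> smooth g"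
    using L(1) smooth_vector_derivative(2) by fastforce
  then show "\<exists>h'. (\<forall>x. (h has_vector_derivative h' x) (at x)) \<and>
     (\<exists>L. (\<forall>(f,g)\<in>set L. smooth f \<and> smooth g) \<and> h' = (\<lambda>x. \<Sum>(f,g)\<leftarrow>L. f x * g x))"
    using has_vector_derivative_sum_list_mult[OF L(1)] L(2)
    by (intro exI[of _ "\<lambda>x. \<Sum>(f,g)\<leftarrow>?L. f x * g x"]) blast
qed

lemma has_vector_derivative_affine_comp:
  assumes "(g has_vector_derivative g') (at (c * x + d))"
  shows "((\<lambda>x. g (c * x + d)) has_vector_derivative of_real c * g') (at x)"
proof -
  have "((g \<circ> (\<lambda>x. c * x + d)) has_vector_derivative (c *\<^sub>R g')) (at x)"
    by (rule vector_diff_chain_at)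
       (auto intro!: derivative_eq_intros assms simp: has_real_derivative_iff_has_vector_derivative[symmetric])
  then show ?thesis by (simp add: o_def scaleR_conv_of_real)
qed

lemma smooth_affine_comp: assumes "smooth f" shows "smooth (\<lambda>x. f (c * x + d))"
proof (rule smooth_coinduct[where P="\<lambda>h. \<exists>g z. smooth g \<and> h = (\<lambda>x. z * g (c * x + d))"])
  show "\<exists>g z. smooth g \<and> (\<lambda>x. f (c * x + d)) = (\<lambda>x. z * g (c * x + d))"
    using assms by (intro exI[of _ f] exI[of _ 1]) auto
next
  fix h assume "\<exists>g z. smooth g \<and> h = (\<lambda>x. z * g (c * x + d))"
  then obtain g z where g: "smooth g" "h = (\<lambda>x. z * g (c * x + d))" by blast
  have "(h has_vector_derivative (z * of_real c) * vector_derivative g (at (c * x + d))) (at x)" for x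
    unfolding g(2) mult.assoc
    by (intro has_vector_derivative_mult_right has_vector_derivative_affine_comp
        smooth_vector_derivative(1) g(1))
  then show "\<exists>h'. (\<forall>x. (h has_vector_derivative h' x) (at x)) \<and> (\<exists>g z. smooth g \<and> h' = (\<lambda>x. z * g (c * x + d)))"
    using smooth_vector_derivative(2)[OF g(1)]
    by (intro exI[of _ "\<lambda>x. (z * of_real c) * vector_derivative g (at (c * x + d))"]) auto
qed

lemma smooth_cmult: "smooth f \<Longrightarrow> smooth (\<lambda>x. c * f x)"
  using smooth_mult[OF smooth_const] by blast

lemma smooth_diff: "smooth f \<Longrightarrow> smooth g \<Longrightarrow> smooth (\<lambda>x. f x - g x)"
  using smooth_add[of f "\<lambda>x. (-1) * g x"] smooth_cmult[of g "-1"] by simp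

lemma smooth_sum: "finite I \<Longrightarrow> (\<And>i. i \<in> I \<Longrightarrow> smooth (f i)) \<Longrightarrow> smooth (\<lambda>x. \<Sum>i\<in>I. f i x)"
  by (induction I rule: finite_induct) (auto intro: smooth_const smooth_add)

lemma smooth_cnj: "smooth f \<Longrightarrow> smooth (\<lambda>x. cnj (f x))"
proof (rule smooth_coinduct[where P="\<lambda>h. \<exists>g. smooth g \<and> h = (\<lambda>x. cnj (g x))"])
  fix h :: fn assume "\<exists>g. smooth g \<and> h = (\<lambda>x. cnj (g x))"
  then obtain g where g: "smooth g" "h = (\<lambda>x. cnj (g x))" by blast
  have "(h has_vector_derivative cnj (vector_derivative g (at x))) (at x)" for x
    unfolding g(2)
    by (rule bounded_linear.has_vector_derivative[OF bounded_linear_cnj smooth_vector_derivative(1)[OF g(1)]])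
  then show "\<exists>g'. (\<forall>x. (h has_vector_derivative g' x) (at x)) \<and> (\<exists>g. smooth g \<and> g' = (\<lambda>x. cnj (g x)))"
    using smooth_vector_derivative(2)[OF g(1)] by (intro exI[of _ "\<lambda>x. cnj (vector_derivative g (at x))"]) blast
qed blast

lemma has_vector_derivative_power:
  fixes f :: fn
  assumes "(f has_vector_derivative f') (at x)"
  shows "((\<lambda>x. f x ^ k) has_vector_derivative (of_nat k * f x ^ (k - 1) * f')) (at x)"
proof (induction k)
  case (Suc k)
  have "((\<lambda>x. f x * f x ^ k) has_vector_derivative (f x * (of_nat k * f x ^ (k - 1) * f') + f' * f x ^ k)) (at x)"
    by (intro has_vector_derivative_mult assms Suc)
  moreover have "f x * (of_nat k * f x ^ (k - 1) * f') + f' * f x ^ k = of_nat (Suc k) * f x ^ (Suc k - 1) * f'"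
    by (cases k) (auto simp: algebra_simps)
  ultimately show ?case by simp
qed simp

lemma has_vector_derivative_inverse:
  fixes f :: fn
  assumes "(f has_vector_derivative f') (at x)" "f x \<noteq> 0"
  shows "((\<lambda>x. inverse (f x)) has_vector_derivative (- f' / (f x)^2)) (at x)"
proof -
  have "((\<lambda>x. inverse (f x)) has_derivative (\<lambda>h. - (inverse (f x) * (h *\<^sub>R f') * inverse (f x)))) (at x)"
    using Deriv.has_derivative_inverse[OF assms(2) assms(1)[unfolded has_vector_derivative_def]] by simp
  moreover have "(\<lambda>h. - (inverse (f x) * (h *\<^sub>R f') * inverse (f x))) = (\<lambda>h. h *\<^sub>R (- f' / (f x)^2))"
    using assms(2) by (auto simp: fun_eq_iff scaleR_conv_of_real field_simps power2_eq_square)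
  ultimately show ?thesis unfolding has_vector_derivative_def by simp
qed

text \<open>The derivatives of \<open>1 / f\<close> are all of the form \<open>q / f ^ k\<close> with \<open>q\<close> smooth.\<close>

lemma smooth_inverse: assumes "smooth f" "\<And>x. f x \<noteq> 0" shows "smooth (\<lambda>x. inverse (f x))"
proof (rule smooth_coinduct[where P="\<lambda>h. \<exists>q k. smooth q \<and> h = (\<lambda>x. q x / f x ^ k)"])
  show "\<exists>q k. smooth q \<and> (\<lambda>x. inverse (f x)) = (\<lambda>x. q x / f x ^ k)"
    by (intro exI[of _ "\<lambda>x. 1"] exI[of _ 1]) (auto simp: smooth_const field_simps)
next
  fix h assume "\<exists>q k. smooth q \<and> h = (\<lambda>x. q x / f x ^ k)"
  then obtain q k where q: "smooth q" "h = (\<lambda>x. q x / f x ^ k)" by blast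
  let ?f' = "\<lambda>x. vector_derivative f (at x)" and ?q' = "\<lambda>x. vector_derivative q (at x)"
  define r where "r x = ?q' x * f x - of_nat k * q x * ?f' x" for x
  have "smooth r" unfolding r_def
    by (intro smooth_diff smooth_mult smooth_vector_derivative q assms smooth_const)
  moreover have "(h has_vector_derivative r x / f x ^ (Suc k)) (at x)" for x
  proof -
    have "((\<lambda>x. q x * inverse (f x ^ k)) has_vector_derivative
        (q x * (- (of_nat k * f x ^ (k - 1) * ?f' x) / (f x ^ k)^2) + ?q' x * inverse (f x ^ k))) (at x)"
      by (intro has_vector_derivative_mult has_vector_derivative_inverse has_vector_derivative_power
          smooth_vector_derivative q assms) (simp add: assms)
    moreover have "q x * (- (of_nat k * f x ^ (k - 1) * ?f' x) / (f x ^ k)^2) + ?q' x * inverse (f x ^ k)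
        = r x / f x ^ (Suc k)"
      using assms(2)[of x] unfolding r_def
      by (cases k) (auto simp: field_simps power2_eq_square)
    ultimately show ?thesis unfolding q(2) by (simp add: field_simps)
  qed
  ultimately show "\<exists>h'. (\<forall>x. (h has_vector_derivative h' x) (at x)) \<and> (\<exists>q k. smooth q \<and> h' = (\<lambda>x. q x / f x ^ k))"
    by (intro exI[of _ "\<lambda>x. r x / f x ^ (Suc k)"]) blast
qed

section \<open>Smooth step functions\<close>

lemma tendsto_poly_times_exp_neg_at_top: "((\<lambda>y. poly p y * exp (- y)) \<longlongrightarrow> (0::real)) at_top"
proof -
  have "((\<lambda>y. \<Sum>i\<le>degree p. coeff p i * (y ^ i / exp y)) \<longlongrightarrow> (\<Sum>i\<le>degree p. coeff p i * 0)) at_top"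
    by (intro tendsto_sum tendsto_mult tendsto_const tendsto_power_div_exp_0)
  moreover have "(\<lambda>y. \<Sum>i\<le>degree p. coeff p i * (y ^ i / exp y)) = (\<lambda>y. poly p y * exp (- y))"
    by (auto simp: fun_eq_iff poly_altdef sum_distrib_right exp_minus divide_inverse mult.assoc)
  ultimately show ?thesis by simp
qed

text \<open>The classical flat function \<open>exp (-1/x)\<close>, times a polynomial in \<open>1/x\<close> so that the family is
  closed under differentiation.\<close>

definition flat_exp :: "real poly \<Rightarrow> real \<Rightarrow> real" where
  "flat_exp p x = (if x > 0 then poly p (1/x) * exp (- (1/x)) else 0)"

text \<open>At \<open>0\<close> the difference quotient is \<open>poly (pCons 0 p) (1/y) * exp (- 1/y)\<close> for \<open>y > 0\<close>,
  which tends to \<open>0\<close> because the exponential beats every polynomial.\<close>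

lemma flat_exp_has_real_derivative_0: "(flat_exp p has_real_derivative 0) (at 0)"
proof -
  have "((\<lambda>y. (flat_exp p y - flat_exp p 0) / (y - 0)) \<longlongrightarrow> 0) (at 0)"
  proof (rule filterlim_split_at)
    show "((\<lambda>y. (flat_exp p y - flat_exp p 0) / (y - 0)) \<longlongrightarrow> 0) (at_left 0)"
      by (rule tendsto_eventually) (auto simp: eventually_at_left_field flat_exp_def intro!: exI[of _ "-1"])
    have "((\<lambda>x. poly (pCons 0 p) (1/x) * exp (- (1/x))) \<longlongrightarrow> (0::real)) (at_right 0)"
      using filterlim_compose[OF tendsto_poly_times_exp_neg_at_top[of "pCons 0 p"] filterlim_inverse_at_top_right]
      by (simp add: o_def inverse_eq_divide)
    then show "((\<lambda>y. (flat_exp p y - flat_exp p 0) / (y - 0)) \<longlongrightarrow> 0) (at_right 0)"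
      by (rule tendsto_cong[THEN iffD1, rotated])
         (auto simp: eventually_at_right_field flat_exp_def intro!: exI[of _ 1])
  qed
  then show ?thesis by (simp add: has_field_derivative_iff)
qed

lemma flat_exp_has_real_derivative:
  "(flat_exp p has_real_derivative flat_exp ([:0,0,1:] * (p - pderiv p)) x) (at x)"
proof (cases x "0::real" rule: linorder_cases)
  case greater
  have "((\<lambda>x. poly p (1/x) * exp (- (1/x))) has_real_derivative
         (poly (pderiv p) (1/x) * (- 1 / x^2)) * exp (- (1/x)) + poly p (1/x) * (exp (- (1/x)) * (1 / x^2))) (at x)"
    using greater by (auto intro!: derivative_eq_intros DERIV_chain2[OF poly_DERIV] simp: power2_eq_square field_simps)
  moreover have "(poly (pderiv p) (1/x) * (- 1 / x^2)) * exp (- (1/x)) + poly p (1/x) * (exp (- (1/x)) * (1 / x^2))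
      = flat_exp ([:0,0,1:] * (p - pderiv p)) x"
    using greater by (simp add: flat_exp_def poly_diff field_simps power2_eq_square)
  ultimately have "((\<lambda>x. poly p (1/x) * exp (- (1/x))) has_real_derivative
      flat_exp ([:0,0,1:] * (p - pderiv p)) x) (at x)"
    by simp
  then show ?thesis
    by (rule has_field_derivative_transform_within_open[where S="{0<..}"])
       (use greater in \<open>auto simp: flat_exp_def\<close>)
next
  case less
  have "(flat_exp p has_real_derivative 0) (at x)"
    by (rule has_field_derivative_transform_within_open[where S="{..<0}", OF DERIV_const])
       (use less in \<open>auto simp: flat_exp_def\<close>)
  then show ?thesis using less by (simp add: flat_exp_def)
qed (simp add: flat_exp_has_real_derivative_0 flat_exp_def)

lemma smooth_flat_exp: "smooth (\<lambda>x. of_real (flat_exp p x))"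
proof (rule smooth_coinduct[where P="\<lambda>h. \<exists>p. h = (\<lambda>x. of_real (flat_exp p x))"])
  fix h :: fn assume "\<exists>p. h = (\<lambda>x. of_real (flat_exp p x))"
  then obtain p where p: "h = (\<lambda>x. of_real (flat_exp p x))" by blast
  show "\<exists>g'. (\<forall>x. (h has_vector_derivative g' x) (at x)) \<and> (\<exists>p. g' = (\<lambda>x. of_real (flat_exp p x)))"
    unfolding p
    by (intro exI[of _ "\<lambda>x. of_real (flat_exp ([:0,0,1:] * (p - pderiv p)) x)"])
       (auto intro!: has_vector_derivative_of_real flat_exp_has_real_derivative[of p, simplified])
qed blast

lemma flat_exp_1_nonneg: "flat_exp 1 x \<ge> 0"
  and flat_exp_1_pos: "x > 0 \<Longrightarrow> flat_exp 1 x > 0"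
  and flat_exp_eq_0: "x \<le> 0 \<Longrightarrow> flat_exp p x = 0"
  by (auto simp: flat_exp_def)

lemma flat_exp_1_sum_pos: "flat_exp 1 x + flat_exp 1 (1 - x) > 0"
  using flat_exp_1_pos[of x] flat_exp_1_pos[of "1 - x"] flat_exp_1_nonneg[of x] flat_exp_1_nonneg[of "1 - x"]
  by (cases "x > 0") linarith+

definition smooth_step :: fn where
  "smooth_step x = of_real (flat_exp 1 x / (flat_exp 1 x + flat_exp 1 (1 - x)))"

lemma smooth_step_eq_0: "x \<le> 0 \<Longrightarrow> smooth_step x = 0"
  by (simp add: smooth_step_def flat_exp_eq_0)

lemma smooth_step_eq_1: "x \<ge> 1 \<Longrightarrow> smooth_step x = 1"
  using flat_exp_1_sum_pos[of x] by (simp add: smooth_step_def flat_exp_eq_0)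

lemma norm_smooth_step_le_1: "norm (smooth_step x) \<le> 1"
proof -
  have "0 \<le> flat_exp 1 x / (flat_exp 1 x + flat_exp 1 (1 - x))"
    "flat_exp 1 x / (flat_exp 1 x + flat_exp 1 (1 - x)) \<le> 1"
    using flat_exp_1_sum_pos[of x] flat_exp_1_nonneg[of x] flat_exp_1_nonneg[of "1 - x"] by auto
  then show ?thesis
    by (simp only: smooth_step_def norm_of_real abs_of_nonneg)
qed

lemma smooth_smooth_step: "smooth smooth_step"
proof -
  have reflected: "smooth (\<lambda>x. of_real (flat_exp 1 (-1 * x + 1)))"
    using smooth_affine_comp[OF smooth_flat_exp[of 1], where c="-1" and d=1] by simp
  have "smooth (\<lambda>x. of_real (flat_exp 1 x) * inverse (of_real (flat_exp 1 x) + of_real (flat_exp 1 (-1 * x + 1))))"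
  proof (intro smooth_mult smooth_flat_exp smooth_inverse smooth_add reflected)
    show "complex_of_real (flat_exp 1 x) + complex_of_real (flat_exp 1 (- 1 * x + 1)) \<noteq> 0" for x
      unfolding of_real_add[symmetric] of_real_eq_0_iff using flat_exp_1_sum_pos[of x] by simp
  qed
  then show ?thesis
    unfolding smooth_step_def[abs_def] by (simp add: field_simps)
qed

lemma smooth_smooth_step_affine: "smooth (\<lambda>x. smooth_step (c * x + d))"
  by (rule smooth_affine_comp[OF smooth_smooth_step])

section \<open>Square-integrable functions\<close>

lemma borel_measurable_cnj [measurable]:
  "f \<in> borel_measurable M \<Longrightarrow> (\<lambda>x. cnj (f x :: complex)) \<in> borel_measurable M"
  by (rule borel_measurable_continuous_on[OF continuous_on_cnj[OF continuous_on_id]])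

lemma L2_borel_measurable: "L2 f \<Longrightarrow> f \<in> borel_measurable borel"
  by (simp add: L2_def)

lemma L2_cnj: "L2 f \<Longrightarrow> L2 (\<lambda>x. cnj (f x))"
  by (simp add: L2_def borel_measurable_cnj)

lemma L2_integrable_mult:
  assumes "L2 f" "L2 g" shows "integrable lborel (\<lambda>x. f x * g x)"
proof (rule Bochner_Integration.integrable_bound)
  show "integrable lborel (\<lambda>x. ((cmod (f x))\<^sup>2 + (cmod (g x))\<^sup>2) / 2)"
    using assms unfolding L2_def by (intro integrable_divide integrable_add) auto
  have [measurable]: "f \<in> borel_measurable borel" "g \<in> borel_measurable borel"
    using assms by (auto simp: L2_def)
  show "(\<lambda>x. f x * g x) \<in> borel_measurable lborel" by measurable
  show "AE x in lborel. norm (f x * g x) \<le> norm (((cmod (f x))\<^sup>2 + (cmod (g x))\<^sup>2) / 2)"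
  proof (intro AE_I2)
    fix x
    have "2 * (cmod (f x) * cmod (g x)) \<le> (cmod (f x))\<^sup>2 + (cmod (g x))\<^sup>2"
      using sum_squares_bound[of "cmod (f x)" "cmod (g x)"] by (simp add: algebra_simps power2_eq_square)
    then show "norm (f x * g x) \<le> norm (((cmod (f x))\<^sup>2 + (cmod (g x))\<^sup>2) / 2)"
      by (simp add: norm_mult)
  qed
qed

lemma cmod_add_squared_le: "(cmod (a + b))\<^sup>2 \<le> 2 * (cmod a)\<^sup>2 + 2 * (cmod b)\<^sup>2"
proof -
  have "(cmod (a + b))\<^sup>2 \<le> (cmod a + cmod b)\<^sup>2"
    by (intro power_mono norm_triangle_ineq) simp
  also have "\<dots> \<le> 2 * (cmod a)\<^sup>2 + 2 * (cmod b)\<^sup>2"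
    using sum_squares_bound[of "cmod a" "cmod b"] by (simp add: algebra_simps power2_eq_square)
  finally show ?thesis .
qed

lemma L2_add: assumes "L2 f" "L2 g" shows "L2 (\<lambda>x. f x + g x)"
  unfolding L2_def
proof
  have [measurable]: "f \<in> borel_measurable borel" "g \<in> borel_measurable borel"
    using assms by (auto simp: L2_def)
  show "(\<lambda>x. f x + g x) \<in> borel_measurable lborel" by measurable
  show "integrable lborel (\<lambda>x. (cmod (f x + g x))\<^sup>2)"
  proof (rule Bochner_Integration.integrable_bound)
    show "integrable lborel (\<lambda>x. 2 * (cmod (f x))\<^sup>2 + 2 * (cmod (g x))\<^sup>2)"
      using assms unfolding L2_def by (intro Bochner_Integration.integrable_add integrable_mult_right) auto
    show "AE x in lborel. norm ((cmod (f x + g x))\<^sup>2) \<le> norm (2 * (cmod (f x))\<^sup>2 + 2 * (cmod (g x))\<^sup>2)"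
      using cmod_add_squared_le by (intro AE_I2) simp
  qed measurable
qed

lemma L2_cmult: "L2 f \<Longrightarrow> L2 (\<lambda>x. c * f x)"
  unfolding L2_def by (auto simp: norm_mult power_mult_distrib)

lemma L2_diff: "L2 f \<Longrightarrow> L2 g \<Longrightarrow> L2 (\<lambda>x. f x - g x)"
  using L2_add[of f "\<lambda>x. (-1) * g x"] L2_cmult[of g "-1"] by simp

lemma L2_zero: "L2 (\<lambda>x. 0)"
  by (simp add: L2_def)

lemma L2_sum: "finite I \<Longrightarrow> (\<And>i. i \<in> I \<Longrightarrow> L2 (f i)) \<Longrightarrow> L2 (\<lambda>x. \<Sum>i\<in>I. f i x)"
  by (induction I rule: finite_induct) (auto intro: L2_zero L2_add)

lemma integrable_continuous_compact_support:
  fixes g :: "real \<Rightarrow> 'b::euclidean_space"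
  assumes "continuous_on UNIV g" "\<And>x. \<bar>x\<bar> > R \<Longrightarrow> g x = 0"
  shows "integrable lborel g"
proof -
  have "integrable lborel (\<lambda>x. indicator {-R..R} x *\<^sub>R g x)"
    by (rule borel_integrable_compact) (auto intro: continuous_on_subset[OF assms(1)])
  moreover have "(\<lambda>x. indicator {-R..R} x *\<^sub>R g x) = g"
    using assms(2) by (auto simp: fun_eq_iff indicator_def abs_if split: if_splits)
  ultimately show ?thesis by simp
qed

lemma L2_continuous_compact_support:
  assumes "continuous_on UNIV g" "\<And>x. \<bar>x\<bar> > R \<Longrightarrow> g x = 0"
  shows "L2 g"
  unfolding L2_def
proof
  show "g \<in> borel_measurable lborel"
    using assms(1) by (simp add: borel_measurable_continuous_onI)
  show "integrable lborel (\<lambda>x. (cmod (g x))\<^sup>2)"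
    by (rule integrable_continuous_compact_support[where R=R]) (use assms in \<open>auto intro!: continuous_intros\<close>)
qed

lemma L2_indicator: "L2 (\<lambda>x. indicator {a<..<b} x)"
  unfolding L2_def
proof
  show "(\<lambda>x. indicator {a<..<b} x :: complex) \<in> borel_measurable lborel" by measurable
  have "integrable lborel (\<lambda>x. indicator {a..b} x *\<^sub>R (1::real))"
    by (rule borel_integrable_compact) auto
  then show "integrable lborel (\<lambda>x. (cmod (indicator {a<..<b} x :: complex))\<^sup>2)"
    by (rule Bochner_Integration.integrable_bound) (auto simp: indicator_def)
qed

lemma integral_mult_bounded_tendsto:
  fixes h :: fn and c :: "nat \<Rightarrow> fn"
  assumes h: "integrable lborel h" and c: "\<And>n. c n \<in> borel_measurable borel"
    and bounded: "\<And>n x. norm (c n x) \<le> K" and lim: "\<And>x. (\<lambda>n. c n x) \<longlonglongrightarrow> l x"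
  shows "(\<lambda>n. LINT x|lborel. h x * c n x) \<longlonglongrightarrow> (LINT x|lborel. h x * l x)"
proof -
  have [measurable]: "h \<in> borel_measurable borel" using h by auto
  note [measurable] = c borel_measurable_LIMSEQ_metric[OF c lim]
  have w: "integrable lborel (\<lambda>x. K * norm (h x))" using h by auto
  have "AE x in lborel. (\<lambda>n. h x * c n x) \<longlonglongrightarrow> h x * l x"
    by (intro AE_I2 tendsto_mult tendsto_const lim)
  moreover have "AE x in lborel. norm (h x * c n x) \<le> K * norm (h x)" for n
  proof (intro AE_I2)
    fix x
    have "norm (h x) * norm (c n x) \<le> norm (h x) * K" by (rule mult_left_mono[OF bounded]) simp
    then show "norm (h x * c n x) \<le> K * norm (h x)" by (simp add: norm_mult mult.commute)
  qed
  ultimately show ?thesis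
    by (intro integral_dominated_convergence[OF _ _ w]) auto
qed

lemma integrable_mult_bounded:
  fixes h c :: fn
  assumes "integrable lborel h" "c \<in> borel_measurable borel" "\<And>x. norm (c x) \<le> K"
  shows "integrable lborel (\<lambda>x. h x * c x)"
proof (rule Bochner_Integration.integrable_bound[where f="\<lambda>x. K * norm (h x)"])
  have [measurable]: "h \<in> borel_measurable borel" "c \<in> borel_measurable borel" using assms by auto
  show "integrable lborel (\<lambda>x. K * norm (h x))" using assms(1) by auto
  show "(\<lambda>x. h x * c x) \<in> borel_measurable lborel" by measurable
  show "AE x in lborel. norm (h x * c x) \<le> norm (K * norm (h x))"
  proof (intro AE_I2)
    fix x
    have "norm (h x) * norm (c x) \<le> norm (h x) * K" by (rule mult_left_mono[OF assms(3)]) simp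
    then show "norm (h x * c x) \<le> norm (K * norm (h x))" by (simp add: norm_mult mult.commute)
  qed
qed

section \<open>Test functions\<close>

lemma has_vector_derivative_eq_0_on_open:
  fixes f :: "real \<Rightarrow> 'b::real_normed_vector"
  assumes "(f has_vector_derivative f') (at x)" "open S" "x \<in> S" "\<And>y. y \<in> S \<Longrightarrow> f y = 0"
  shows "f' = 0"
proof -
  have "(f has_vector_derivative 0) (at x)"
    by (rule has_vector_derivative_transform_within_open[where S=S, OF has_vector_derivative_const])
       (use assms in auto)
  then show ?thesis using assms(1) vector_derivative_unique_at by blast
qed

lemma open_abs_gt: "open {y::real. \<bar>y\<bar> > R}"
  by (rule open_Collect_less) (auto intro: continuous_intros)

lemma test_fun_smooth: "test_fun \<phi> \<Longrightarrow> smooth \<phi>"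
  by (simp add: test_fun_iff_smooth)

lemma test_fun_vector_derivative:
  assumes "test_fun \<phi>" shows "test_fun (\<lambda>x. vector_derivative \<phi> (at x))"
  unfolding test_fun_iff_smooth
proof (intro conjI smooth_vector_derivative(2) test_fun_smooth[OF assms])
  obtain R where R: "\<And>x. \<bar>x\<bar> > R \<Longrightarrow> \<phi> x = 0"
    using assms unfolding test_fun_iff_smooth by blast
  have "vector_derivative \<phi> (at x) = 0" if "\<bar>x\<bar> > R" for x
    by (rule has_vector_derivative_eq_0_on_open[OF
          smooth_vector_derivative(1)[OF test_fun_smooth[OF assms]] open_abs_gt])
       (use that R in auto)
  then show "\<exists>R. \<forall>x. R < \<bar>x\<bar> \<longrightarrow> vector_derivative \<phi> (at x) = 0" by blast
qed

lemma test_fun_integrable_mult: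
  assumes "test_fun \<phi>" "continuous_on UNIV g"
  shows "integrable lborel (\<lambda>x. g x * \<phi> x)"
proof -
  obtain R where "\<And>x. \<bar>x\<bar> > R \<Longrightarrow> \<phi> x = 0"
    using assms(1) unfolding test_fun_iff_smooth by blast
  then show ?thesis
    by (intro integrable_continuous_compact_support[where R=R] continuous_intros assms(2)
        smooth_continuous_on test_fun_smooth assms(1)) auto
qed

lemma test_fun_L2: "test_fun \<phi> \<Longrightarrow> L2 \<phi>"
  unfolding test_fun_iff_smooth using smooth_continuous_on L2_continuous_compact_support by blast

lemma test_fun_bounded:
  assumes "test_fun \<phi>" obtains B where "\<And>x. norm (\<phi> x) \<le> B"
proof -
  obtain R where R: "\<And>x. \<bar>x\<bar> > R \<Longrightarrow> \<phi> x = 0"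
    using assms unfolding test_fun_iff_smooth by blast
  have "compact (\<phi> ` {-R..R})"
    by (intro compact_continuous_image continuous_on_subset[OF smooth_continuous_on]
        test_fun_smooth assms) auto
  then obtain B where B: "\<And>y. y \<in> \<phi> ` {-R..R} \<Longrightarrow> norm y \<le> B"
    using compact_imp_bounded bounded_iff by metis
  have "norm (\<phi> x) \<le> max B 0" for x
  proof (cases "\<bar>x\<bar> > R")
    case False
    then have "\<phi> x \<in> \<phi> ` {-R..R}" by (intro imageI) (auto simp: abs_le_iff not_less)
    then show ?thesis using B by force
  qed (use R in simp)
  then show ?thesis using that by blast
qed

lemma integration_by_parts_test_fun:
  assumes F: "\<And>x. (F has_vector_derivative F' x) (at x)" "continuous_on UNIV F'" and \<phi>: "test_fun \<phi>"
  shows "(LINT x|lborel. F x * vector_derivative \<phi> (at x)) = - (LINT x|lborel. F' x * \<phi> x)"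
proof -
  let ?\<phi>' = "\<lambda>x. vector_derivative \<phi> (at x)"
  have \<phi>': "test_fun ?\<phi>'" by (rule test_fun_vector_derivative[OF \<phi>])
  have cF: "continuous_on UNIV F" by (rule continuous_on_vector_derivative) (use F(1) has_vector_derivative_at_within in blast)
  obtain R where R: "\<And>x. \<bar>x\<bar> > R \<Longrightarrow> F x * \<phi> x = 0"
    using \<phi> unfolding test_fun_iff_smooth by force
  have d: "((\<lambda>x. F x * \<phi> x) has_vector_derivative (F x * ?\<phi>' x + F' x * \<phi> x)) (at x)" for x
    by (intro has_vector_derivative_mult F smooth_vector_derivative(1) test_fun_smooth \<phi>)
  have i1: "integrable lborel (\<lambda>x. F x * ?\<phi>' x)" and i2: "integrable lborel (\<lambda>x. F' x * \<phi> x)"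
    using test_fun_integrable_mult \<phi> \<phi>' cF F(2) by blast+
  have outside: "F x * ?\<phi>' x + F' x * \<phi> x = 0" if "\<bar>x\<bar> > R" for x
    by (rule has_vector_derivative_eq_0_on_open[OF d open_abs_gt]) (use that R in auto)
  let ?a = "- \<bar>R\<bar> - 1" and ?b = "\<bar>R\<bar> + 1"
  have "((\<lambda>x. F x * ?\<phi>' x + F' x * \<phi> x) has_integral (F ?b * \<phi> ?b - F ?a * \<phi> ?a)) {?a..?b}"
    by (rule fundamental_theorem_of_calculus) (auto intro: has_vector_derivative_at_within d)
  then have "((\<lambda>x. F x * ?\<phi>' x + F' x * \<phi> x) has_integral 0) {?a..?b}"
    using R[of ?a] R[of ?b] by simp
  then have "((\<lambda>x. F x * ?\<phi>' x + F' x * \<phi> x) has_integral 0) UNIV"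
    by (rule has_integral_on_superset) (use outside in auto)
  then have "(LINT x|lborel. F x * ?\<phi>' x + F' x * \<phi> x) = 0"
    using has_integral_integral_lborel[OF Bochner_Integration.integrable_add[OF i1 i2]] has_integral_unique
    by blast
  then show ?thesis using i1 i2 by (simp add: add_eq_0_iff)
qed

section \<open>Cutoffs and weak derivatives\<close>

definition plateau :: fn where
  "plateau y = smooth_step (y + 2) * smooth_step (2 - y)"

lemma smooth_plateau: "smooth plateau"
proof -
  have "smooth (\<lambda>y. smooth_step (1 * y + 2) * smooth_step ((-1) * y + 2))"
    by (intro smooth_mult smooth_smooth_step_affine)
  then show ?thesis unfolding plateau_def[abs_def] by simp
qed

lemma plateau_eq_1: "\<bar>y\<bar> \<le> 1 \<Longrightarrow> plateau y = 1"
  by (simp add: plateau_def smooth_step_eq_1)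

lemma plateau_eq_0: "\<bar>y\<bar> > 2 \<Longrightarrow> plateau y = 0"
  by (auto simp: plateau_def smooth_step_eq_0 abs_if split: if_splits)

lemma norm_plateau_le_1: "norm (plateau y) \<le> 1"
  unfolding plateau_def norm_mult using norm_smooth_step_le_1 by (intro mult_le_one) auto

lemma test_fun_plateau: "test_fun plateau"
  unfolding test_fun_iff_smooth using smooth_plateau plateau_eq_0 by blast

definition cutoff :: "real \<Rightarrow> fn" where
  "cutoff R x = plateau (x / R)"

definition cutoff_deriv :: "real \<Rightarrow> fn" where
  "cutoff_deriv R x = of_real (1 / R) * vector_derivative plateau (at (x / R))"

lemma cutoff_has_vector_derivative: "(cutoff R has_vector_derivative cutoff_deriv R x) (at x)"
  using has_vector_derivative_affine_comp[where c="1 / R" and d=0,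
      OF smooth_vector_derivative(1)[OF smooth_plateau]]
  by (simp add: cutoff_def[abs_def] cutoff_deriv_def)

lemma smooth_cutoff: "smooth (cutoff R)"
  using smooth_affine_comp[OF smooth_plateau, where c="1 / R" and d=0]
  by (simp add: cutoff_def[abs_def])

lemma smooth_cutoff_deriv: "smooth (cutoff_deriv R)"
  by (rule smooth_derivative[OF smooth_cutoff cutoff_has_vector_derivative])

lemma norm_cutoff_le_1: "norm (cutoff R x) \<le> 1"
  by (simp add: cutoff_def norm_plateau_le_1)

lemma cutoff_eq_0: "R > 0 \<Longrightarrow> \<bar>x\<bar> > 2 * R \<Longrightarrow> cutoff R x = 0"
  by (auto simp: cutoff_def field_simps intro!: plateau_eq_0)

lemma tendsto_cutoff: "(\<lambda>n. cutoff (real n + 1) x) \<longlonglongrightarrow> 1"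
proof (rule tendsto_eventually)
  obtain n0 :: nat where "real n0 \<ge> \<bar>x\<bar>" using real_arch_simple by blast
  then show "eventually (\<lambda>n. cutoff (real n + 1) x = 1) sequentially"
    unfolding eventually_sequentially
    by (intro exI[of _ n0] allI impI) (auto simp: cutoff_def divide_le_eq_1 intro!: plateau_eq_1)
qed

lemma cutoff_deriv_bound: obtains B where "\<And>R x. R > 0 \<Longrightarrow> norm (cutoff_deriv R x) \<le> B / R"
proof -
  obtain B where B: "\<And>y. norm (vector_derivative plateau (at y)) \<le> B"
    using test_fun_bounded[OF test_fun_vector_derivative[OF test_fun_plateau]] by blast
  have "norm (cutoff_deriv R x) \<le> B / R" if "R > 0" for R x
  proof -
    have "norm (cutoff_deriv R x) = norm (vector_derivative plateau (at (x / R))) / R"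
      using that by (simp add: cutoff_deriv_def norm_mult norm_divide)
    then show ?thesis using B[of "x / R"] that by (simp add: divide_right_mono)
  qed
  then show ?thesis using that by blast
qed

lemma tendsto_cutoff_deriv: "(\<lambda>n. cutoff_deriv (real n + 1) x) \<longlonglongrightarrow> 0"
proof -
  obtain B where B: "\<And>R x. R > 0 \<Longrightarrow> norm (cutoff_deriv R x) \<le> B / R"
    using cutoff_deriv_bound by blast
  have "(\<lambda>n. B / (real n + 1)) \<longlonglongrightarrow> 0"
    using tendsto_mult[OF tendsto_const[of B] LIMSEQ_inverse_real_of_nat]
    by (simp add: divide_inverse add.commute)
  then show ?thesis
    by (rule Lim_null_comparison[rotated]) (auto intro!: always_eventually B)
qed

lemma cutoff_deriv_uniformly_bounded: obtains K where "\<And>n x. norm (cutoff_deriv (real n + 1) x) \<le> K"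
proof -
  obtain B where B: "\<And>R x. R > 0 \<Longrightarrow> norm (cutoff_deriv R x) \<le> B / R"
    using cutoff_deriv_bound by blast
  have "norm (cutoff_deriv (real n + 1) x) \<le> \<bar>B\<bar>" for n x
  proof -
    have "B / (real n + 1) \<le> \<bar>B\<bar> / (real n + 1)" by (intro divide_right_mono) auto
    also have "\<dots> \<le> \<bar>B\<bar>" by (simp add: field_simps)
    finally show ?thesis using B[of "real n + 1" x] by simp
  qed
  then show ?thesis using that by blast
qed

lemma weak_deriv_cutoff_mult:
  assumes wd: "weak_deriv f g" and \<psi>: "smooth \<psi>" "\<And>x. (\<psi> has_vector_derivative \<psi>' x) (at x)"
    and R: "R > 0"
    and int: "integrable lborel (\<lambda>x. (f x * \<psi>' x) * cutoff R x)"
      "integrable lborel (\<lambda>x. (f x * \<psi> x) * cutoff_deriv R x)"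
  shows "(LINT x|lborel. (f x * \<psi>' x) * cutoff R x) + (LINT x|lborel. (f x * \<psi> x) * cutoff_deriv R x)
    = - (LINT x|lborel. (g x * \<psi> x) * cutoff R x)"
proof -
  have deriv: "((\<lambda>x. cutoff R x * \<psi> x) has_vector_derivative (cutoff R x * \<psi>' x + cutoff_deriv R x * \<psi> x)) (at x)"
    for x by (intro has_vector_derivative_mult cutoff_has_vector_derivative \<psi>)
  have test: "test_fun (\<lambda>x. cutoff R x * \<psi> x)"
    unfolding test_fun_iff_smooth
    by (intro conjI smooth_mult smooth_cutoff \<psi> exI[of _ "2 * R"]) (simp add: cutoff_eq_0 R)
  have "(LINT x|lborel. (f x * \<psi>' x) * cutoff R x) + (LINT x|lborel. (f x * \<psi> x) * cutoff_deriv R x)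
      = (LINT x|lborel. f x * vector_derivative (\<lambda>x. cutoff R x * \<psi> x) (at x))"
    using Bochner_Integration.integral_add[OF int] vector_derivative_at[OF deriv]
    by (simp add: algebra_simps)
  also have "\<dots> = - (LINT x|lborel. (g x * \<psi> x) * cutoff R x)"
    using wd test unfolding weak_deriv_def by (simp add: algebra_simps)
  finally show ?thesis .
qed

text \<open>Approximate \<open>\<psi>\<close> by the test functions \<open>cutoff (n + 1) * \<psi>\<close> and pass to the limit by
  dominated convergence.\<close>

lemma weak_deriv_integration_by_parts:
  assumes wd: "weak_deriv f g" and \<psi>: "smooth \<psi>" "\<And>x. (\<psi> has_vector_derivative \<psi>' x) (at x)"
    and L2: "L2 \<psi>" "L2 \<psi>'"
  shows "(LINT x|lborel. g x * \<psi> x) = - (LINT x|lborel. f x * \<psi>' x)"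
proof -
  let ?\<chi> = "\<lambda>n. cutoff (real n + 1)" and ?\<chi>' = "\<lambda>n. cutoff_deriv (real n + 1)"
  obtain K where K: "\<And>n x. norm (?\<chi>' n x) \<le> K" using cutoff_deriv_uniformly_bounded by blast
  have int: "integrable lborel (\<lambda>x. f x * \<psi> x)" "integrable lborel (\<lambda>x. f x * \<psi>' x)"
    "integrable lborel (\<lambda>x. g x * \<psi> x)"
    using L2_integrable_mult wd L2 by (auto simp: weak_deriv_def)
  have meas: "?\<chi> n \<in> borel_measurable borel" "?\<chi>' n \<in> borel_measurable borel" for n
    using smooth_borel_measurable smooth_cutoff smooth_cutoff_deriv by auto
  have "(LINT x|lborel. (f x * \<psi>' x) * ?\<chi> n x) + (LINT x|lborel. (f x * \<psi> x) * ?\<chi>' n x)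
      = - (LINT x|lborel. (g x * \<psi> x) * ?\<chi> n x)" for n
    by (intro weak_deriv_cutoff_mult[OF wd \<psi>] integrable_mult_bounded[OF int(2) meas(1) norm_cutoff_le_1]
        integrable_mult_bounded[OF int(1) meas(2) K]) simp
  moreover have "(\<lambda>n. (LINT x|lborel. (f x * \<psi>' x) * ?\<chi> n x) + (LINT x|lborel. (f x * \<psi> x) * ?\<chi>' n x))
      \<longlonglongrightarrow> (LINT x|lborel. (f x * \<psi>' x) * 1) + (LINT x|lborel. (f x * \<psi> x) * 0)"
    by (intro tendsto_add integral_mult_bounded_tendsto[OF int(2) meas(1) norm_cutoff_le_1 tendsto_cutoff]
        integral_mult_bounded_tendsto[OF int(1) meas(2) K tendsto_cutoff_deriv])
  moreover have "(\<lambda>n. - (LINT x|lborel. (g x * \<psi> x) * ?\<chi> n x)) \<longlonglongrightarrow> - (LINT x|lborel. (g x * \<psi> x) * 1)"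
    by (intro tendsto_minus integral_mult_bounded_tendsto[OF int(3) meas(1) norm_cutoff_le_1 tendsto_cutoff])
  ultimately show ?thesis
    using LIMSEQ_unique by fastforce
qed

section \<open>The fundamental lemma of the calculus of variations\<close>

definition interval_bump :: "real \<Rightarrow> real \<Rightarrow> real \<Rightarrow> fn" where
  "interval_bump N a b x = smooth_step (N * (x - a) - 1) * smooth_step (N * (b - x) - 1)"

lemma smooth_interval_bump: "smooth (interval_bump N a b)"
proof -
  have "smooth (\<lambda>x. smooth_step (N * x + (- N * a - 1)) * smooth_step ((- N) * x + (N * b - 1)))"
    by (intro smooth_mult smooth_smooth_step_affine)
  then show ?thesis
    unfolding interval_bump_def[abs_def] by (simp add: algebra_simps)
qed

lemma interval_bump_eq_0_outside:
  assumes "N \<ge> 0" "x \<le> a \<or> x \<ge> b" shows "interval_bump N a b x = 0"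
proof -
  have "N * (x - a) \<le> 0 \<or> N * (b - x) \<le> 0"
    using assms by (auto intro: mult_nonneg_nonpos)
  then show ?thesis by (auto simp: interval_bump_def smooth_step_eq_0)
qed

lemma interval_bump_eq_0_near_0:
  assumes "N > 0" "0 \<le> a \<or> b \<le> 0" "\<bar>x\<bar> < 1 / N" shows "interval_bump N a b x = 0"
proof -
  have "\<bar>N * x\<bar> < 1" using assms(1,3) by (simp add: abs_mult field_simps)
  moreover have "N * a \<ge> 0 \<or> N * b \<le> 0"
    using assms(1,2) by (auto intro: mult_nonneg_nonpos)
  ultimately have "N * (x - a) - 1 \<le> 0 \<or> N * (b - x) - 1 \<le> 0"
    by (auto simp: right_diff_distrib)
  then show ?thesis by (auto simp: interval_bump_def smooth_step_eq_0)
qed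

lemma norm_interval_bump_le_1: "norm (interval_bump N a b x) \<le> 1"
  unfolding interval_bump_def norm_mult using norm_smooth_step_le_1 by (intro mult_le_one) auto

lemma tendsto_interval_bump: "(\<lambda>n. interval_bump (real n + 1) a b x) \<longlonglongrightarrow> indicator {a<..<b} x"
proof (cases "a < x \<and> x < b")
  case True
  obtain n0 :: nat where n0: "real n0 \<ge> 2 / (x - a) + 2 / (b - x)" using real_arch_simple by blast
  have "interval_bump (real n + 1) a b x = 1" if "n \<ge> n0" for n
  proof -
    have "real n0 \<le> real n" "2 / (x - a) > 0" "2 / (b - x) > 0" using that True by auto
    then have "real n + 1 \<ge> 2 / (x - a)" "real n + 1 \<ge> 2 / (b - x)"
      using n0 by linarith+
    then have "(real n + 1) * (x - a) \<ge> 2" "(real n + 1) * (b - x) \<ge> 2"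
      using True by (auto simp: field_simps)
    then show ?thesis by (simp add: interval_bump_def smooth_step_eq_1)
  qed
  then have "(\<lambda>n. interval_bump (real n + 1) a b x) \<longlonglongrightarrow> 1"
    by (intro tendsto_eventually) (auto simp: eventually_sequentially)
  then show ?thesis using True by simp
next
  case False
  then have "interval_bump (real n + 1) a b x = 0" for n
    by (intro interval_bump_eq_0_outside) auto
  then show ?thesis using False by simp
qed

text \<open>Vanishing near \<open>0\<close> keeps \<open>\<phi>' / x\<close> square-integrable, so these test functions lie in the
  domain of \<open>t = q\<^sup>-\<^sup>1 p\<close>.\<close>

definition punctured_test_fun :: "fn \<Rightarrow> bool" where
  "punctured_test_fun \<phi> \<longleftrightarrow> test_fun \<phi> \<and> (\<exists>\<delta>>0. \<forall>x. \<bar>x\<bar> < \<delta> \<longrightarrow> \<phi> x = 0)"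

lemma punctured_test_fun_interval_bump:
  assumes "N > 0" "0 \<le> a \<or> b \<le> 0" shows "punctured_test_fun (interval_bump N a b)"
  unfolding punctured_test_fun_def test_fun_iff_smooth
proof (intro conjI smooth_interval_bump)
  have "interval_bump N a b x = 0" if "\<bar>a\<bar> + \<bar>b\<bar> < \<bar>x\<bar>" for x
    using assms(1) that by (intro interval_bump_eq_0_outside) (auto simp: abs_if split: if_splits)
  then show "\<exists>R. \<forall>x. R < \<bar>x\<bar> \<longrightarrow> interval_bump N a b x = 0" by blast
  have "interval_bump N a b x = 0" if "\<bar>x\<bar> < 1 / N" for x
    using assms that by (intro interval_bump_eq_0_near_0)
  then show "\<exists>\<delta>>0. \<forall>x. \<bar>x\<bar> < \<delta> \<longrightarrow> interval_bump N a b x = 0"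
    using assms(1) by (intro exI[of _ "1 / N"]) auto
qed

lemma emeasure_density_max_0:
  fixes v :: "real \<Rightarrow> real"
  assumes v: "integrable lborel v" and A: "A \<in> sets borel"
  shows "integrable lborel (\<lambda>y. max 0 (v y) * indicator A y)"
    and "emeasure (density lborel (\<lambda>y. ennreal (max 0 (v y)))) A
      = ennreal (LINT y|lborel. max 0 (v y) * indicator A y)"
proof -
  have [measurable]: "v \<in> borel_measurable borel" using v by auto
  show int: "integrable lborel (\<lambda>y. max 0 (v y) * indicator A y)"
  proof (rule Bochner_Integration.integrable_bound[OF integrable_norm[OF v]])
    show "AE y in lborel. norm (max 0 (v y) * indicator A y) \<le> norm (norm (v y))"
      by (intro AE_I2) (auto simp: indicator_def)
  qed (use A in measurable)
  have "emeasure (density lborel (\<lambda>y. ennreal (max 0 (v y)))) A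
      = (\<integral>\<^sup>+ y. ennreal (max 0 (v y) * indicator A y) \<partial>lborel)"
    using A by (subst emeasure_density) (auto intro!: nn_integral_cong simp: indicator_def)
  also have "\<dots> = ennreal (LINT y|lborel. max 0 (v y) * indicator A y)"
    by (rule nn_integral_eq_integral[OF int]) auto
  finally show "emeasure (density lborel (\<lambda>y. ennreal (max 0 (v y)))) A
      = ennreal (LINT y|lborel. max 0 (v y) * indicator A y)" .
qed

text \<open>The positive and negative parts of \<open>v\<close> are densities of two finite measures that agree on
  all tails \<open>{x<..}\<close>, hence coincide.\<close>

lemma ae_zero_if_tail_integrals_zero:
  fixes v :: "real \<Rightarrow> real"
  assumes v: "integrable lborel v" and tails: "\<And>x. (LINT y|lborel. v y * indicator {x<..} y) = 0"
  shows "AE y in lborel. v y = 0"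
proof -
  have [measurable]: "v \<in> borel_measurable borel" using v by auto
  note pos = emeasure_density_max_0[OF v] and neg = emeasure_density_max_0[OF integrable_minus[OF v]]
  have "density lborel (\<lambda>y. ennreal (max 0 (v y))) = density lborel (\<lambda>y. ennreal (max 0 (- v y)))"
  proof (rule measure_eqI_lessThan)
    fix x :: real
    show "emeasure (density lborel (\<lambda>y. ennreal (max 0 (v y)))) {x<..} < \<infinity>"
      using pos(2)[of "{x<..}"] by simp
    have "(\<lambda>y. v y * indicator {x<..} y)
        = (\<lambda>y. max 0 (v y) * indicator {x<..} y - max 0 (- v y) * indicator {x<..} y)"
      by (auto simp: fun_eq_iff max_def indicator_def)
    then have "(LINT y|lborel. v y * indicator {x<..} y)
        = (LINT y|lborel. max 0 (v y) * indicator {x<..} y) - (LINT y|lborel. max 0 (- v y) * indicator {x<..} y)"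
      by (simp only:) (rule Bochner_Integration.integral_diff[OF pos(1) neg(1)]; simp)
    then show "emeasure (density lborel (\<lambda>y. ennreal (max 0 (v y)))) {x<..}
        = emeasure (density lborel (\<lambda>y. ennreal (max 0 (- v y)))) {x<..}"
      using tails[of x] pos(2)[of "{x<..}"] neg(2)[of "{x<..}"] by simp
  qed simp_all
  then have "AE y in lborel. ennreal (max 0 (v y)) = ennreal (max 0 (- v y))"
    by (intro sigma_finite_measure.density_unique[OF sigma_finite_lborel]) auto
  then show ?thesis
    by eventually_elim (auto simp: max_def split: if_splits)
qed

lemma ae_zero_if_tail_integrals_zero_complex:
  fixes v :: fn
  assumes v: "integrable lborel v" and tails: "\<And>x. (LINT y|lborel. v y * indicator {x<..} y) = 0"
  shows "AE y in lborel. v y = 0"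
proof -
  have Re: "AE y in lborel. Re (c * v y) = 0" for c
  proof (rule ae_zero_if_tail_integrals_zero)
    show "integrable lborel (\<lambda>y. Re (c * v y))" by (intro integrable_Re integrable_mult_right v)
    fix x
    have int: "integrable lborel (\<lambda>y. c * (v y * indicator {x<..} y))"
      by (intro integrable_mult_right integrable_mult_bounded[OF v, where K=1]) (auto simp: indicator_def)
    have "(LINT y|lborel. Re (c * v y) * indicator {x<..} y) = Re (LINT y|lborel. c * (v y * indicator {x<..} y))"
      by (subst integral_Re[OF int, symmetric]) (auto intro!: Bochner_Integration.integral_cong simp: indicator_def)
    also have "\<dots> = 0" using tails[of x] by simp
    finally show "(LINT y|lborel. Re (c * v y) * indicator {x<..} y) = 0" .
  qed
  from Re[of 1] Re[of "- \<i>"] show ?thesis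
    by eventually_elim (simp add: complex_eq_iff)
qed

lemma ae_zero_if_interval_integrals_zero:
  fixes w :: fn
  assumes int: "\<And>a b. integrable lborel (\<lambda>x. w x * indicator {a<..<b} x)"
    and zero: "\<And>a b. a < b \<Longrightarrow> (LINT x|lborel. w x * indicator {a<..<b} x) = 0"
  shows "AE x in lborel. w x = 0"
proof -
  have "AE x in lborel. w x * indicator {-real N<..<real N} x = 0" for N :: nat
  proof (rule ae_zero_if_tail_integrals_zero_complex[OF int])
    fix x
    show "(LINT y|lborel. w y * indicator {-real N<..<real N} y * indicator {x<..} y) = 0"
    proof (cases "max x (- real N) < real N")
      case True
      have "(\<lambda>y. w y * indicator {-real N<..<real N} y * indicator {x<..} y)
          = (\<lambda>y. w y * indicator {max x (- real N)<..<real N} y)"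
        by (auto simp: fun_eq_iff indicator_def)
      then show ?thesis using zero[OF True] by simp
    next
      case False
      then have "(\<lambda>y. w y * indicator {-real N<..<real N} y * indicator {x<..} y) = (\<lambda>y. 0)"
        by (auto simp: fun_eq_iff indicator_def)
      then show ?thesis by simp
    qed
  qed
  then have "AE x in lborel. \<forall>N::nat. w x * indicator {-real N<..<real N} x = 0"
    by (subst AE_all_countable) auto
  then show ?thesis
  proof eventually_elim
    case (elim x)
    obtain N :: nat where "\<bar>x\<bar> < real N" using reals_Archimedean2 by blast
    with elim[rule_format, of N] show ?case by (simp add: indicator_def abs_less_iff)
  qed
qed

lemma interval_integral_eq_0_if_orthogonal:
  assumes w: "L2 w"
    and orth: "\<And>\<phi>. punctured_test_fun \<phi> \<Longrightarrow> (LINT x|lborel. w x * \<phi> x) = 0"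
    and ab: "0 \<le> a \<or> b \<le> 0"
  shows "(LINT x|lborel. w x * indicator {a<..<b} x) = 0"
proof -
  define h where "h x = w x * indicator {a<..<b} x" for x
  have "(\<lambda>n. LINT x|lborel. h x * interval_bump (real n + 1) a b x)
      \<longlonglongrightarrow> (LINT x|lborel. h x * indicator {a<..<b} x)"
    unfolding h_def
    by (rule integral_mult_bounded_tendsto[OF L2_integrable_mult[OF w L2_indicator]
        smooth_borel_measurable[OF smooth_interval_bump] norm_interval_bump_le_1 tendsto_interval_bump])
  moreover have "(LINT x|lborel. h x * interval_bump (real n + 1) a b x) = 0" for n
  proof -
    have "(\<lambda>x. h x * interval_bump (real n + 1) a b x) = (\<lambda>x. w x * interval_bump (real n + 1) a b x)"
    proof
      fix x show "h x * interval_bump (real n + 1) a b x = w x * interval_bump (real n + 1) a b x"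
        by (cases "a < x \<and> x < b") (auto simp: h_def interval_bump_eq_0_outside)
    qed
    then show ?thesis
      using orth[OF punctured_test_fun_interval_bump[of "real n + 1" a b, OF _ ab]] by simp
  qed
  ultimately have "(\<lambda>n. 0) \<longlonglongrightarrow> (LINT x|lborel. h x * indicator {a<..<b} x)"
    by simp
  then have "(LINT x|lborel. h x * indicator {a<..<b} x) = 0"
    by (simp add: LIMSEQ_const_iff)
  moreover have "(\<lambda>x. h x * indicator {a<..<b} x) = (\<lambda>x. w x * indicator {a<..<b} x)"
    by (auto simp: h_def indicator_def fun_eq_iff)
  ultimately show ?thesis by simp
qed

lemma ae_zero_if_orthogonal_to_punctured_test_funs:
  assumes w: "L2 w"
    and orth: "\<And>\<phi>. punctured_test_fun \<phi> \<Longrightarrow> (LINT x|lborel. w x * \<phi> x) = 0"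
  shows "AE x in lborel. w x = 0"
proof (rule ae_zero_if_interval_integrals_zero)
  show int: "integrable lborel (\<lambda>x. w x * indicator {a<..<b} x)" for a b
    by (rule L2_integrable_mult[OF w L2_indicator])
  fix a b :: real assume ab: "a < b"
  show "(LINT x|lborel. w x * indicator {a<..<b} x) = 0"
  proof (cases "0 \<le> a \<or> b \<le> 0")
    case True
    show ?thesis using interval_integral_eq_0_if_orthogonal[OF w orth True] .
  next
    case False
    have [measurable]: "w \<in> borel_measurable borel" using w by (rule L2_borel_measurable)
    have "(LINT x|lborel. w x * indicator {a<..<b} x)
        = (LINT x|lborel. w x * indicator {a<..<0} x + w x * indicator {0<..<b} x)"
    proof (rule integral_cong_AE)
      show "AE x in lborel. w x * indicator {a<..<b} x = w x * indicator {a<..<0} x + w x * indicator {0<..<b} x"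
        using AE_lborel_singleton[of 0] by eventually_elim (use False in \<open>auto simp: indicator_def\<close>)
    qed measurable
    also have "\<dots> = 0"
      using interval_integral_eq_0_if_orthogonal[OF w orth, of a 0]
        interval_integral_eq_0_if_orthogonal[OF w orth, of 0 b] int[of a 0] int[of 0 b] by simp
    finally show ?thesis .
  qed
qed

lemma weak_deriv_unique:
  assumes "weak_deriv f g" "weak_deriv f' g'" "AE x in lborel. f x = f' x"
  shows "AE x in lborel. g x = g' x"
proof -
  have L: "L2 f" "L2 g" "L2 f'" "L2 g'" using assms unfolding weak_deriv_def by auto
  have [measurable]: "f \<in> borel_measurable borel" "f' \<in> borel_measurable borel"
    using L by (auto simp: L2_def)
  have "AE x in lborel. g x - g' x = 0"
  proof (rule ae_zero_if_orthogonal_to_punctured_test_funs[OF L2_diff[OF L(2) L(4)]])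
    fix \<phi> assume "punctured_test_fun \<phi>"
    then have \<phi>: "test_fun \<phi>" by (simp add: punctured_test_fun_def)
    have [measurable]: "(\<lambda>x. vector_derivative \<phi> (at x)) \<in> borel_measurable borel"
      by (intro smooth_borel_measurable test_fun_smooth test_fun_vector_derivative \<phi>)
    have "(LINT x|lborel. f x * vector_derivative \<phi> (at x)) = (LINT x|lborel. f' x * vector_derivative \<phi> (at x))"
      by (rule integral_cong_AE) (use assms(3) in \<open>auto elim!: eventually_mono\<close>)
    then have "(LINT x|lborel. g x * \<phi> x) = (LINT x|lborel. g' x * \<phi> x)"
      using assms(1,2) \<phi> unfolding weak_deriv_def by auto
    moreover have "integrable lborel (\<lambda>x. g x * \<phi> x)" "integrable lborel (\<lambda>x. g' x * \<phi> x)"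
      using L2_integrable_mult[OF _ test_fun_L2[OF \<phi>]] L by auto
    ultimately show "(LINT x|lborel. (g x - g' x) * \<phi> x) = 0"
      by (simp add: left_diff_distrib)
  qed
  then show ?thesis by auto
qed

section \<open>The operator \<open>t\<close> on punctured test functions\<close>

lemma L2_divide_by_x:
  assumes g: "L2 g" and \<delta>: "\<delta> > 0" "\<And>x. \<bar>x\<bar> < \<delta> \<Longrightarrow> g x = 0"
  shows "L2 (\<lambda>x. g x / of_real x)"
  unfolding L2_def
proof
  have [measurable]: "g \<in> borel_measurable borel" using g by (rule L2_borel_measurable)
  show "(\<lambda>x. g x / of_real x) \<in> borel_measurable lborel" by measurable
  show "integrable lborel (\<lambda>x. (cmod (g x / of_real x))\<^sup>2)"
  proof (rule Bochner_Integration.integrable_bound)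
    show "integrable lborel (\<lambda>x. (cmod (g x))\<^sup>2 / \<delta>\<^sup>2)"
      using g unfolding L2_def by (intro integrable_divide) auto
    have "(cmod (g x / of_real x))\<^sup>2 \<le> (cmod (g x))\<^sup>2 / \<delta>\<^sup>2" for x
    proof (cases "\<bar>x\<bar> < \<delta>")
      case False
      then have "\<delta>\<^sup>2 \<le> x\<^sup>2" using \<delta>(1) by (simp add: abs_le_square_iff[symmetric])
      moreover have "0 < \<delta>\<^sup>2" using \<delta>(1) by simp
      ultimately have "(cmod (g x))\<^sup>2 / x\<^sup>2 \<le> (cmod (g x))\<^sup>2 / \<delta>\<^sup>2"
        by (intro divide_left_mono mult_pos_pos) auto
      then show ?thesis by (simp add: norm_divide power_divide)
    qed (simp add: \<delta>)
    then show "AE x in lborel. norm ((cmod (g x / of_real x))\<^sup>2) \<le> norm ((cmod (g x))\<^sup>2 / \<delta>\<^sup>2)"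
      by (intro AE_I2) simp
  qed measurable
qed

lemma weak_deriv_test_fun: "test_fun \<phi> \<Longrightarrow> weak_deriv \<phi> (\<lambda>x. vector_derivative \<phi> (at x))"
  unfolding weak_deriv_def
  by (auto intro!: test_fun_L2 test_fun_vector_derivative integration_by_parts_test_fun
      smooth_vector_derivative(1) smooth_continuous_on test_fun_smooth)

lemma t_rel_punctured_test_fun:
  assumes "punctured_test_fun \<phi>"
  shows "t_rel \<phi> (\<lambda>x. - \<i> * vector_derivative \<phi> (at x) / of_real x)"
proof -
  obtain \<delta> where \<delta>: "\<delta> > 0" "\<And>x. \<bar>x\<bar> < \<delta> \<Longrightarrow> \<phi> x = 0"
    using assms unfolding punctured_test_fun_def by blast
  have \<phi>: "test_fun \<phi>" using assms by (simp add: punctured_test_fun_def)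
  let ?\<phi>' = "\<lambda>x. vector_derivative \<phi> (at x)"
  have "?\<phi>' x = 0" if "\<bar>x\<bar> < \<delta>" for x
  proof (rule has_vector_derivative_eq_0_on_open)
    show "(\<phi> has_vector_derivative ?\<phi>' x) (at x)"
      by (rule smooth_vector_derivative(1)[OF test_fun_smooth[OF \<phi>]])
    show "open {y::real. \<bar>y\<bar> < \<delta>}" by (rule open_Collect_less) (auto intro: continuous_intros)
  qed (use that \<delta> in auto)
  then have "L2 (\<lambda>x. - \<i> * ?\<phi>' x / of_real x)"
    using L2_divide_by_x[OF L2_cmult[OF test_fun_L2[OF test_fun_vector_derivative[OF \<phi>]]] \<delta>(1), of "- \<i>"]
    by simp
  moreover have "L2 (\<lambda>x. - \<i> * ?\<phi>' x)"
    by (rule L2_cmult[OF test_fun_L2[OF test_fun_vector_derivative[OF \<phi>]]])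
  ultimately show ?thesis
    unfolding t_rel_def
  proof (intro exI conjI)
    show "p_rel \<phi> (\<lambda>x. - \<i> * ?\<phi>' x)"
      unfolding p_rel_def using weak_deriv_test_fun[OF \<phi>] \<open>L2 (\<lambda>x. - \<i> * ?\<phi>' x)\<close> by auto
  qed (auto simp: qinv_rel_def)
qed

lemma ae_eq_if_l2_inner_eq_on_dom_t:
  assumes L: "L2 m1" "L2 m2" and eq: "\<And>f k. t_rel f k \<Longrightarrow> l2_inner m1 f = l2_inner m2 f"
  shows "AE x in lborel. m1 x = m2 x"
proof -
  have "AE x in lborel. cnj (m1 x) - cnj (m2 x) = 0"
  proof (rule ae_zero_if_orthogonal_to_punctured_test_funs[OF L2_diff[OF L2_cnj[OF L(1)] L2_cnj[OF L(2)]]])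
    fix \<phi> assume \<phi>: "punctured_test_fun \<phi>"
    then have L\<phi>: "L2 \<phi>" by (simp add: punctured_test_fun_def test_fun_L2)
    have "l2_inner m1 \<phi> = l2_inner m2 \<phi>" by (rule eq[OF t_rel_punctured_test_fun[OF \<phi>]])
    moreover have "integrable lborel (\<lambda>x. cnj (m1 x) * \<phi> x)" "integrable lborel (\<lambda>x. cnj (m2 x) * \<phi> x)"
      using L2_integrable_mult[OF L2_cnj L\<phi>] L by auto
    ultimately show "(LINT x|lborel. (cnj (m1 x) - cnj (m2 x)) * \<phi> x) = 0"
      unfolding l2_inner_def by (simp add: left_diff_distrib)
  qed
  then show ?thesis by eventually_elim (metis complex_cnj_cancel_iff eq_iff_diff_eq_0)
qed

section \<open>Gaussian combinations\<close>

lemma integrable_power_times_gaussian: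
  assumes a: "a > 0" shows "integrable lborel (\<lambda>x::real. x ^ m * exp (- a * x\<^sup>2))"
proof -
  define \<sigma> where "\<sigma> = sqrt (1 / (2 * a))"
  have \<sigma>: "\<sigma> > 0" "2 * \<sigma>\<^sup>2 = 1 / a" using a by (simp_all add: \<sigma>_def)
  have "integrable lborel (\<lambda>x. sqrt (2 * pi * \<sigma>\<^sup>2) * (normal_density 0 \<sigma> x * (x - 0) ^ m))"
    by (intro integrable_mult_right integrable_normal_moment \<sigma>)
  moreover have "sqrt (2 * pi * \<sigma>\<^sup>2) * (normal_density 0 \<sigma> x * (x - 0) ^ m) = x ^ m * exp (- a * x\<^sup>2)" for x
  proof -
    have "- x\<^sup>2 / (2 * \<sigma>\<^sup>2) = - a * x\<^sup>2" using \<sigma> a by simp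
    then show ?thesis using \<sigma>(1) by (simp add: normal_density_def)
  qed
  then have "(\<lambda>x. sqrt (2 * pi * \<sigma>\<^sup>2) * (normal_density 0 \<sigma> x * (x - 0) ^ m)) = (\<lambda>x. x ^ m * exp (- a * x\<^sup>2))"
    by (rule ext)
  ultimately show ?thesis by (simp only:)
qed

definition gauss_mono :: "nat \<Rightarrow> real \<Rightarrow> nat \<Rightarrow> real \<Rightarrow> real" where
  "gauss_mono p a k x = x ^ (2 * k + p) * exp (- a * x\<^sup>2 / 2)"

lemma L2_gauss_mono: assumes "a > 0" shows "L2 (\<lambda>x. of_real (gauss_mono p a k x))"
  unfolding L2_def
proof
  show "(\<lambda>x. complex_of_real (gauss_mono p a k x)) \<in> borel_measurable lborel"
    unfolding gauss_mono_def by measurable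
  have "(cmod (complex_of_real (gauss_mono p a k x)))\<^sup>2 = x ^ (2 * (2 * k + p)) * exp (- a * x\<^sup>2)" for x
  proof -
    have "(cmod (complex_of_real (gauss_mono p a k x)))\<^sup>2 = (gauss_mono p a k x)\<^sup>2" by simp
    also have "\<dots> = (x ^ (2 * k + p))\<^sup>2 * (exp (- a * x\<^sup>2 / 2))\<^sup>2"
      by (simp add: gauss_mono_def power_mult_distrib)
    also have "(exp (- a * x\<^sup>2 / 2))\<^sup>2 = exp (- a * x\<^sup>2)"
      by (simp add: power2_eq_square exp_add[symmetric])
    finally show ?thesis by (simp add: power_mult[symmetric] mult.commute)
  qed
  then show "integrable lborel (\<lambda>x. (cmod (complex_of_real (gauss_mono p a k x)))\<^sup>2)"
    using integrable_power_times_gaussian[OF assms, of "2 * (2 * k + p)"] by simp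
qed

text \<open>For \<open>p = 0\<close> (\<open>p = 1\<close>) these combinations span \<open>M\<^sub>0\<close> (\<open>M\<^sub>1\<close>); keeping all powers below the
  top one makes the class invariant under \<open>t\<close> (\<open>t\<^sup>*\<close>).\<close>

definition gauss_comb :: "nat \<Rightarrow> (nat \<times> real) set \<Rightarrow> (nat \<times> real \<Rightarrow> nat \<Rightarrow> complex) \<Rightarrow> fn" where
  "gauss_comb p F V x = (\<Sum>i\<in>F. \<Sum>k\<le>fst i. V i k * of_real (gauss_mono p (snd i) k x))"

definition admissible :: "(nat \<times> real) set \<Rightarrow> bool" where
  "admissible F \<longleftrightarrow> finite F \<and> (\<forall>i\<in>F. snd i > 0)"

lemma L2_gauss_comb: "admissible F \<Longrightarrow> L2 (gauss_comb p F V)"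
  unfolding gauss_comb_def[abs_def] admissible_def
  by (intro L2_sum L2_cmult L2_gauss_mono) auto

lemma continuous_on_gauss_comb: "continuous_on UNIV (gauss_comb p F V)"
  unfolding gauss_comb_def[abs_def] gauss_mono_def by (auto intro!: continuous_intros)

lemma borel_measurable_gauss_comb [measurable]: "gauss_comb p F V \<in> borel_measurable borel"
  using continuous_on_gauss_comb borel_measurable_continuous_onI by blast

lemma gauss_comb_sum:
  "(\<Sum>m\<le>N. c m * gauss_comb p F (W m) x) = gauss_comb p F (\<lambda>i k. \<Sum>m\<le>N. c m * W m i k) x"
  unfolding gauss_comb_def sum_distrib_left sum_distrib_right
  by (subst sum.swap) (simp add: sum.swap[of _ "{..N}"] mult.assoc)

lemma gauss_comb_diff: "gauss_comb p F V x - gauss_comb p F W x = gauss_comb p F (\<lambda>i k. V i k - W i k) x"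
  unfolding gauss_comb_def by (simp add: sum_subtractf[symmetric] left_diff_distrib)

lemma gauss_comb_cmult: "c * gauss_comb p F V x = gauss_comb p F (\<lambda>i k. c * V i k) x"
  unfolding gauss_comb_def by (simp add: sum_distrib_left mult.assoc)

lemma gauss_comb_1_eq: "gauss_comb (Suc 0) F V x = of_real x * gauss_comb 0 F V x"
  by (simp add: gauss_comb_def gauss_mono_def sum_distrib_left algebra_simps)

lemma gauss_comb_0_even: "gauss_comb 0 F V (- x) = gauss_comb 0 F V x"
  by (simp add: gauss_comb_def gauss_mono_def)

lemma gauss_comb_1_odd: "gauss_comb 1 F V (- x) = - gauss_comb 1 F V x"
  by (simp add: gauss_comb_def gauss_mono_def sum_negf[symmetric])

lemma L2_even_gauss_comb: "admissible F \<Longrightarrow> L2_even (gauss_comb 0 F V)"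
  unfolding L2_even_def using L2_gauss_comb gauss_comb_0_even by auto

lemma L2_odd_gauss_comb: "admissible F \<Longrightarrow> L2_odd (gauss_comb 1 F V)"
  unfolding L2_odd_def using L2_gauss_comb gauss_comb_1_odd by auto

lemma smooth_gauss_comb: "finite F \<Longrightarrow> smooth (gauss_comb p F V)"
proof -
  have "smooth (\<lambda>x. poly q (of_real x) * of_real (exp (- a * x\<^sup>2 / 2)))" for q a
  proof (rule smooth_coinduct[where P="\<lambda>h. \<exists>q. h = (\<lambda>x. poly q (of_real x) * of_real (exp (- a * x\<^sup>2 / 2)))"])
    fix h :: fn assume "\<exists>q. h = (\<lambda>x. poly q (of_real x) * of_real (exp (- a * x\<^sup>2 / 2)))"
    then obtain q where q: "h = (\<lambda>x. poly q (of_real x) * of_real (exp (- a * x\<^sup>2 / 2)))" by blast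
    have "(h has_vector_derivative poly (pderiv q - [:0, of_real a:] * q) (of_real x) * of_real (exp (- a * x\<^sup>2 / 2))) (at x)" for x
    proof -
      have d1: "((\<lambda>x. poly q (of_real x)) has_vector_derivative poly (pderiv q) (of_real x)) (at x)"
        by (rule has_vector_derivative_real_field) (rule poly_DERIV)
      have d2: "((\<lambda>x. complex_of_real (exp (- a * x\<^sup>2 / 2))) has_vector_derivative
          of_real (exp (- a * x\<^sup>2 / 2) * (- a * x))) (at x)"
        by (rule has_vector_derivative_of_real) (auto intro!: derivative_eq_intros simp: power2_eq_square field_simps)
      show ?thesis unfolding q
        using has_vector_derivative_mult[OF d1 d2] by (simp add: poly_diff algebra_simps)
    qed
    then show "\<exists>g'. (\<forall>x. (h has_vector_derivative g' x) (at x)) \<and> (\<exists>q. g' = (\<lambda>x. poly q (of_real x) * of_real (exp (- a * x\<^sup>2 / 2))))"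
      by (intro exI[of _ "\<lambda>x. poly (pderiv q - [:0, of_real a:] * q) (of_real x) * of_real (exp (- a * x\<^sup>2 / 2))"]) blast
  qed blast
  moreover have "(\<lambda>x. complex_of_real (gauss_mono p a k x))
      = (\<lambda>x. poly (monom 1 (2 * k + p)) (of_real x) * of_real (exp (- a * x\<^sup>2 / 2)))" for a k
    by (auto simp: gauss_mono_def poly_monom fun_eq_iff)
  ultimately show "finite F \<Longrightarrow> ?thesis"
    unfolding gauss_comb_def[abs_def] by (intro smooth_sum smooth_cmult) auto
qed

text \<open>Since \<open>t = 2 d/d(x\<^sup>2)\<close> up to a factor \<open>-\<i>\<close>, \<open>t (x\<^sup>2\<^sup>k exp (- a x\<^sup>2 / 2)) = \<i> a x\<^sup>2\<^sup>k exp (- a x\<^sup>2 / 2)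
  - 2 \<i> k x\<^sup>2\<^sup>k\<^sup>-\<^sup>2 exp (- a x\<^sup>2 / 2)\<close>; on coefficients this is the following upper bidiagonal matrix.\<close>

definition t_matrix :: "real \<Rightarrow> nat \<Rightarrow> (nat \<Rightarrow> complex) \<Rightarrow> nat \<Rightarrow> complex" where
  "t_matrix a n v k = \<i> * of_real a * v k - (if k < n then 2 * \<i> * of_nat (Suc k) * v (Suc k) else 0)"

definition t_coeffs :: "(nat \<times> real \<Rightarrow> nat \<Rightarrow> complex) \<Rightarrow> nat \<times> real \<Rightarrow> nat \<Rightarrow> complex" where
  "t_coeffs V i = t_matrix (snd i) (fst i) (V i)"

lemma gauss_mono_0_has_real_derivative:
  "(gauss_mono 0 a k has_real_derivative
      (2 * real k * (if k = 0 then 0 else gauss_mono 1 a (k - 1) x) - a * gauss_mono 1 a k x)) (at x)"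
proof -
  have "((\<lambda>x. x ^ (2 * k) * exp (- a * x\<^sup>2 / 2)) has_real_derivative
     (real (2 * k) * x ^ (2 * k - 1) * exp (- a * x\<^sup>2 / 2) + x ^ (2 * k) * (exp (- a * x\<^sup>2 / 2) * (- a * x)))) (at x)"
    by (auto intro!: derivative_eq_intros simp: power2_eq_square field_simps)
  moreover have "real (2 * k) * x ^ (2 * k - 1) * exp (- a * x\<^sup>2 / 2) + x ^ (2 * k) * (exp (- a * x\<^sup>2 / 2) * (- a * x))
     = 2 * real k * (if k = 0 then 0 else gauss_mono 1 a (k - 1) x) - a * gauss_mono 1 a k x"
    by (cases k) (auto simp: gauss_mono_def algebra_simps)
  moreover have "(\<lambda>x. x ^ (2 * k) * exp (- a * x\<^sup>2 / 2)) = gauss_mono 0 a k"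
    by (simp add: gauss_mono_def fun_eq_iff)
  ultimately show ?thesis by simp
qed

lemma sum_atMost_shift_down:
  fixes h :: "nat \<Rightarrow> complex"
  shows "(\<Sum>k\<le>n. of_nat k * (if k = 0 then 0 else h (k - 1)) * v k)
       = (\<Sum>k\<le>n. (if k < n then of_nat (Suc k) * v (Suc k) else 0) * h k)"
proof (cases n)
  case (Suc m)
  have "(\<Sum>k\<le>Suc m. of_nat k * (if k = 0 then 0 else h (k - 1)) * v k)
      = (\<Sum>k\<le>m. of_nat (Suc k) * h k * v (Suc k))"
    by (subst sum.atMost_Suc_shift) simp
  also have "\<dots> = (\<Sum>k\<le>Suc m. (if k < Suc m then of_nat (Suc k) * v (Suc k) else 0) * h k)"
    by (simp add: ac_simps)
  finally show ?thesis using Suc by simp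
qed simp

lemma gauss_comb_0_has_vector_derivative:
  "(gauss_comb 0 F V has_vector_derivative \<i> * gauss_comb 1 F (t_coeffs V) x) (at x)"
proof -
  let ?e = "\<lambda>a k. complex_of_real (gauss_mono 1 a k x)"
  have "complex_of_real (2 * real k * (if k = 0 then 0 else gauss_mono 1 a (k - 1) x) - a * gauss_mono 1 a k x)
      = 2 * (of_nat k * (if k = 0 then 0 else ?e a (k - 1))) - of_real a * ?e a k" for a k
    by (cases k) simp_all
  then have "((\<lambda>x. of_real (gauss_mono 0 a k x)) has_vector_derivative
      2 * (of_nat k * (if k = 0 then 0 else ?e a (k - 1))) - of_real a * ?e a k) (at x)" for a k
    using has_vector_derivative_of_real[OF gauss_mono_0_has_real_derivative] by metis
  then have "(gauss_comb 0 F V has_vector_derivative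
     (\<Sum>i\<in>F. \<Sum>k\<le>fst i. V i k * (2 * (of_nat k * (if k = 0 then 0 else ?e (snd i) (k - 1)))
        - of_real (snd i) * ?e (snd i) k))) (at x)"
    unfolding gauss_comb_def[abs_def]
    by (intro has_vector_derivative_sum has_vector_derivative_mult_right)
  moreover have "(\<Sum>k\<le>fst i. V i k * (2 * (of_nat k * (if k = 0 then 0 else ?e (snd i) (k - 1)))
        - of_real (snd i) * ?e (snd i) k))
      = \<i> * (\<Sum>k\<le>fst i. t_coeffs V i k * ?e (snd i) k)" for i
  proof -
    have "(\<Sum>k\<le>fst i. V i k * (2 * (of_nat k * (if k = 0 then 0 else ?e (snd i) (k - 1)))
          - of_real (snd i) * ?e (snd i) k))
        = 2 * (\<Sum>k\<le>fst i. of_nat k * (if k = 0 then 0 else ?e (snd i) (k - 1)) * V i k)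
          - (\<Sum>k\<le>fst i. of_real (snd i) * V i k * ?e (snd i) k)"
      by (simp add: sum_subtractf sum_distrib_left algebra_simps)
    also have "\<dots> = 2 * (\<Sum>k\<le>fst i. (if k < fst i then of_nat (Suc k) * V i (Suc k) else 0) * ?e (snd i) k)
          - (\<Sum>k\<le>fst i. of_real (snd i) * V i k * ?e (snd i) k)"
      by (simp only: sum_atMost_shift_down[where n="fst i" and h="?e (snd i)" and v="V i"])
    also have "\<dots> = (\<Sum>k\<le>fst i. \<i> * (t_coeffs V i k * ?e (snd i) k))"
      unfolding sum_distrib_left[of 2] sum_subtractf[symmetric]
      by (intro sum.cong refl) (auto simp: t_coeffs_def t_matrix_def algebra_simps)
    finally show ?thesis by (simp add: sum_distrib_left)
  qed
  ultimately show ?thesis by (simp add: gauss_comb_def sum_distrib_left)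
qed

lemma weak_deriv_gauss_comb_0:
  assumes F: "admissible F" shows "weak_deriv (gauss_comb 0 F V) (\<lambda>x. \<i> * gauss_comb 1 F (t_coeffs V) x)"
  unfolding weak_deriv_def
proof (intro conjI allI impI L2_gauss_comb L2_cmult F)
  fix \<phi> assume \<phi>: "test_fun \<phi>"
  show "(LINT x|lborel. gauss_comb 0 F V x * vector_derivative \<phi> (at x))
      = - (LINT x|lborel. \<i> * gauss_comb 1 F (t_coeffs V) x * \<phi> x)"
    by (rule integration_by_parts_test_fun[OF gauss_comb_0_has_vector_derivative _ \<phi>])
       (intro continuous_intros continuous_on_gauss_comb)
qed

lemma t_rel_gauss_comb:
  assumes F: "admissible F" shows "t_rel (gauss_comb 0 F V) (gauss_comb 0 F (t_coeffs V))"
  unfolding t_rel_def p_rel_def qinv_rel_def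
proof (intro exI conjI)
  show "weak_deriv (gauss_comb 0 F V) (\<lambda>x. \<i> * gauss_comb 1 F (t_coeffs V) x)"
    by (rule weak_deriv_gauss_comb_0[OF F])
  show "AE x in lborel. gauss_comb 1 F (t_coeffs V) x = - \<i> * (\<i> * gauss_comb 1 F (t_coeffs V) x)"
    by simp
  show "AE x in lborel. gauss_comb 0 F (t_coeffs V) x = gauss_comb 1 F (t_coeffs V) x / complex_of_real x"
    using AE_lborel_singleton[of 0] by eventually_elim (simp add: gauss_comb_1_eq)
qed (use L2_gauss_comb[OF F] in auto)

lemma t_rel_gauss_comb_unique:
  assumes F: "admissible F" and t: "t_rel f h" and f: "AE x in lborel. f x = gauss_comb 0 F V x"
  shows "AE x in lborel. h x = gauss_comb 0 F (t_coeffs V) x"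
proof -
  obtain p g where pg: "weak_deriv f g" "AE x in lborel. p x = - \<i> * g x"
    "AE x in lborel. h x = p x / of_real x"
    using t unfolding t_rel_def p_rel_def qinv_rel_def by blast
  have "AE x in lborel. g x = \<i> * gauss_comb 1 F (t_coeffs V) x"
    by (rule weak_deriv_unique[OF pg(1) weak_deriv_gauss_comb_0[OF F] f])
  with pg(2,3) AE_lborel_singleton[of 0] show ?thesis
    by eventually_elim (simp add: gauss_comb_1_eq)
qed

text \<open>Formally \<open>t\<^sup>* = p q\<^sup>-\<^sup>1\<close>, so \<open>t\<^sup>* (x g) = p g = x (t g)\<close>: on odd combinations \<open>t\<^sup>*\<close> acts
  through the same coefficient matrix as \<open>t\<close> on even ones.\<close>

lemma tadj_rel_gauss_comb:
  assumes F: "admissible F" shows "tadj_rel (gauss_comb 1 F V) (gauss_comb 1 F (t_coeffs V))"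
  unfolding tadj_rel_def
proof (intro conjI allI impI)
  show "L2 (gauss_comb 1 F V)" "L2 (gauss_comb 1 F (t_coeffs V))" using L2_gauss_comb[OF F] by auto
  fix f h assume "t_rel f h"
  then obtain p g where pg: "weak_deriv f g" "AE x in lborel. p x = - \<i> * g x"
    "AE x in lborel. h x = p x / of_real x" "L2 h"
    unfolding t_rel_def p_rel_def qinv_rel_def by blast
  have [measurable]: "h \<in> borel_measurable borel" "g \<in> borel_measurable borel" "f \<in> borel_measurable borel"
    using pg(1,4) by (auto simp: L2_def weak_deriv_def)
  define \<psi> where "\<psi> x = cnj (gauss_comb 0 F V x)" for x
  define \<psi>' where "\<psi>' x = cnj (\<i> * gauss_comb 1 F (t_coeffs V) x)" for x
  have "(\<psi> has_vector_derivative \<psi>' x) (at x)" for x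
    unfolding \<psi>_def[abs_def] \<psi>'_def
    by (rule bounded_linear.has_vector_derivative[OF bounded_linear_cnj gauss_comb_0_has_vector_derivative])
  moreover have "smooth \<psi>"
    unfolding \<psi>_def[abs_def] using F by (intro smooth_cnj smooth_gauss_comb) (simp add: admissible_def)
  moreover have "L2 \<psi>" "L2 \<psi>'" unfolding \<psi>_def[abs_def] \<psi>'_def[abs_def]
    by (intro L2_cnj L2_gauss_comb L2_cmult F)+
  ultimately have by_parts: "(LINT x|lborel. g x * \<psi> x) = - (LINT x|lborel. f x * \<psi>' x)"
    by (intro weak_deriv_integration_by_parts[OF pg(1)])
  have "l2_inner (gauss_comb 1 F V) h = (LINT x|lborel. - \<i> * (g x * \<psi> x))"
    unfolding l2_inner_def
  proof (rule integral_cong_AE)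
    show "AE x in lborel. cnj (gauss_comb 1 F V x) * h x = - \<i> * (g x * \<psi> x)"
      using pg(2,3) AE_lborel_singleton[of 0] by eventually_elim (simp add: gauss_comb_1_eq \<psi>_def)
  qed (simp_all add: \<psi>_def)
  also have "\<dots> = \<i> * (LINT x|lborel. f x * \<psi>' x)"
    using by_parts by simp
  also have "\<dots> = l2_inner (gauss_comb 1 F (t_coeffs V)) f"
    unfolding l2_inner_def \<psi>'_def by (simp add: algebra_simps)
  finally show "l2_inner (gauss_comb 1 F V) h = l2_inner (gauss_comb 1 F (t_coeffs V)) f" .
qed

lemma tadj_rel_gauss_comb_unique:
  assumes F: "admissible F" and t: "tadj_rel f h" and f: "AE x in lborel. f x = gauss_comb 1 F V x"
  shows "AE x in lborel. h x = gauss_comb 1 F (t_coeffs V) x"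
proof (rule ae_eq_if_l2_inner_eq_on_dom_t)
  show "L2 h" "L2 (gauss_comb 1 F (t_coeffs V))" using t L2_gauss_comb[OF F] unfolding tadj_rel_def by auto
  fix f' k assume tk: "t_rel f' k"
  have [measurable]: "f \<in> borel_measurable borel" "k \<in> borel_measurable borel"
    using t tk unfolding tadj_rel_def t_rel_def qinv_rel_def by (auto simp: L2_def)
  have "l2_inner h f' = l2_inner f k" using t tk unfolding tadj_rel_def by auto
  also have "\<dots> = l2_inner (gauss_comb 1 F V) k"
    unfolding l2_inner_def by (rule integral_cong_AE) (use f in \<open>auto elim!: eventually_mono\<close>)
  also have "\<dots> = l2_inner (gauss_comb 1 F (t_coeffs V)) f'"
    using tadj_rel_gauss_comb[OF F] tk unfolding tadj_rel_def by auto
  finally show "l2_inner h f' = l2_inner (gauss_comb 1 F (t_coeffs V)) f'" .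
qed

section \<open>The arctangent series on coefficients\<close>

definition arctan_coeff :: "real \<Rightarrow> nat \<Rightarrow> real" where
  "arctan_coeff \<epsilon> m = (-1)^m / real (2*m+1) * (sqrt \<epsilon>)^(2*m+1)"

lemma norm_suminf_tail_le_geometric:
  fixes b :: "nat \<Rightarrow> 'a::banach"
  assumes b: "\<And>m. norm (b m) \<le> c * q ^ m" and q: "0 \<le> q" "q < 1"
  shows "summable b" and "norm (\<Sum>m. b (Suc m)) \<le> c * q / (1 - q)"
proof -
  have geom: "summable (\<lambda>m. c * q ^ m)"
    by (rule summable_mult, rule summable_geometric) (use q in simp)
  then show "summable b" by (rule summable_comparison_test'[OF _ b])
  have "summable (\<lambda>m. (c * q) * q ^ m)"
    by (rule summable_mult, rule summable_geometric) (use q in simp)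
  then have geom_Suc: "summable (\<lambda>m. c * q ^ Suc m)" by (simp add: ac_simps)
  have norm_Suc: "summable (\<lambda>m. norm (b (Suc m)))"
    by (rule summable_comparison_test'[OF geom_Suc]) (simp only: real_norm_def abs_norm_cancel b)
  have "norm (\<Sum>m. b (Suc m)) \<le> (\<Sum>m. norm (b (Suc m)))" by (rule summable_norm[OF norm_Suc])
  also have "\<dots> \<le> (\<Sum>m. c * q ^ Suc m)" by (rule suminf_le[OF b norm_Suc geom_Suc])
  also have "\<dots> = (\<Sum>m. (c * q) * q ^ m)" by (simp add: ac_simps)
  also have "\<dots> = c * q * (\<Sum>m. q ^ m)"
    by (rule suminf_mult, rule summable_geometric) (use q in simp)
  also have "\<dots> = c * q / (1 - q)" using suminf_geometric[of q] q by simp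
  finally show "norm (\<Sum>m. b (Suc m)) \<le> c * q / (1 - q)" .
qed

text \<open>The coefficient-level form of \<open>\<epsilon>\<^sup>-\<^sup>1\<^sup>/\<^sup>2 arctan (\<surd>\<epsilon> s) = s + O(\<epsilon>)\<close>.\<close>

lemma norm_arctan_term_le:
  fixes x :: "nat \<Rightarrow> complex"
  assumes x: "\<And>j. cmod (x j) \<le> C * K^j" and \<epsilon>: "0 < \<epsilon>"
  shows "cmod (of_real ((-1)^m / real (2*m+1) * \<epsilon>^m) * x (2*m+1)) \<le> C * K * (\<epsilon> * K\<^sup>2)^m"
proof -
  have "\<bar>(-1)^m / real (2*m+1) * \<epsilon>^m\<bar> = \<epsilon>^m / real (2*m+1)"
    using \<epsilon> by (simp add: abs_mult)
  then have "cmod (of_real ((-1)^m / real (2*m+1) * \<epsilon>^m) * x (2*m+1)) = \<epsilon>^m / real (2*m+1) * cmod (x (2*m+1))"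
    unfolding norm_mult norm_of_real by simp
  also have "\<dots> \<le> \<epsilon>^m * (C * K^(2*m+1))"
  proof (rule mult_mono)
    show "\<epsilon>^m / real (2*m+1) \<le> \<epsilon>^m" using \<epsilon> by (simp add: divide_le_eq_1 field_simps)
  qed (use x[of "2*m+1"] \<epsilon> in auto)
  also have "\<dots> = C * K * (\<epsilon> * K\<^sup>2)^m"
  proof -
    have "(\<epsilon> * K\<^sup>2)^m = \<epsilon>^m * K^(2*m)" by (simp add: power_mult_distrib power_mult)
    moreover have "K^(2*m+1) = K^(2*m) * K" by simp
    ultimately show ?thesis by (simp add: ac_simps)
  qed
  finally show ?thesis .
qed

lemma arctan_series_estimate:
  fixes x :: "nat \<Rightarrow> complex"
  assumes x: "\<And>j. cmod (x j) \<le> C * K^j" and C: "C \<ge> 0" and K: "K \<ge> 0"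
    and \<epsilon>: "0 < \<epsilon>" "\<epsilon> * K\<^sup>2 \<le> 1/2"
  shows "summable (\<lambda>m. of_real (arctan_coeff \<epsilon> m) * x (2*m+1))"
    and "cmod (of_real (1 / sqrt \<epsilon>) * (\<Sum>m. of_real (arctan_coeff \<epsilon> m) * x (2*m+1)) - x 1) \<le> 2 * C * K^3 * \<epsilon>"
proof -
  define q where "q = \<epsilon> * K\<^sup>2"
  have q: "0 \<le> q" "q \<le> 1/2" using \<epsilon> by (auto simp: q_def)
  define b where "b m = of_real ((-1)^m / real (2*m+1) * \<epsilon>^m) * x (2*m+1)" for m
  have bound: "cmod (b m) \<le> C * K * q^m" for m
    unfolding b_def q_def by (rule norm_arctan_term_le[OF x \<epsilon>(1)])
  note tail = norm_suminf_tail_le_geometric[OF bound q(1)]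
  have b: "summable b" using tail(1) q by simp
  have arctan: "arctan_coeff \<epsilon> m = sqrt \<epsilon> * ((-1)^m / real (2*m+1) * \<epsilon>^m)" for m
    using \<epsilon>(1) by (simp add: arctan_coeff_def power_add power_mult)
  have coeff: "of_real (arctan_coeff \<epsilon> m) * x (2*m+1) = of_real (sqrt \<epsilon>) * b m" for m
    unfolding arctan b_def by (simp only: of_real_mult mult.assoc)
  show "summable (\<lambda>m. of_real (arctan_coeff \<epsilon> m) * x (2*m+1))"
    unfolding coeff by (rule summable_mult[OF b])
  have "of_real (1 / sqrt \<epsilon>) * (\<Sum>m. of_real (arctan_coeff \<epsilon> m) * x (2*m+1)) - x 1 = (\<Sum>m. b (Suc m))"
    using suminf_split_head[OF b] \<epsilon>(1) unfolding coeff suminf_mult[OF b] by (simp add: b_def)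
  also have "cmod \<dots> \<le> C * K * q / (1 - q)" using tail(2) q by simp
  also have "\<dots> \<le> C * K * q / (1/2)"
    using q C K by (intro divide_left_mono mult_nonneg_nonneg) auto
  also have "\<dots> = 2 * C * K^3 * \<epsilon>"
    by (simp add: q_def power2_eq_square power3_eq_cube)
  finally show "cmod (of_real (1 / sqrt \<epsilon>) * (\<Sum>m. of_real (arctan_coeff \<epsilon> m) * x (2*m+1)) - x 1)
      \<le> 2 * C * K^3 * \<epsilon>" .
qed

lemma eventually_small_at_right_0: "eventually (\<lambda>\<epsilon>. 0 < \<epsilon> \<and> \<epsilon> * K\<^sup>2 \<le> 1/2) (at_right (0::real))"
proof -
  have "((\<lambda>\<epsilon>. \<epsilon> * K\<^sup>2) \<longlongrightarrow> 0 * K\<^sup>2) (at_right (0::real))"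
    by (intro tendsto_mult tendsto_ident_at tendsto_const)
  then have "eventually (\<lambda>\<epsilon>. \<epsilon> * K\<^sup>2 < 1/2) (at_right (0::real))"
    by (intro order_tendstoD(2)) auto
  then show ?thesis
    using eventually_at_right_less[of 0] by eventually_elim auto
qed

lemma tendsto_arctan_series:
  fixes x :: "nat \<Rightarrow> complex"
  assumes x: "\<And>j. cmod (x j) \<le> C * K^j" and C: "C \<ge> 0" and K: "K \<ge> 0"
  shows "eventually (\<lambda>\<epsilon>. summable (\<lambda>m. of_real (arctan_coeff \<epsilon> m) * x (2*m+1))) (at_right 0)"
    and "((\<lambda>\<epsilon>. of_real (1 / sqrt \<epsilon>) * (\<Sum>m. of_real (arctan_coeff \<epsilon> m) * x (2*m+1))) \<longlongrightarrow> x 1) (at_right 0)"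
proof -
  note estimate = arctan_series_estimate[OF x C K]
  show "eventually (\<lambda>\<epsilon>. summable (\<lambda>m. of_real (arctan_coeff \<epsilon> m) * x (2*m+1))) (at_right 0)"
    using eventually_small_at_right_0[of K] by eventually_elim (use estimate(1) in blast)
  have "((\<lambda>\<epsilon>. of_real (1 / sqrt \<epsilon>) * (\<Sum>m. of_real (arctan_coeff \<epsilon> m) * x (2*m+1)) - x 1) \<longlongrightarrow> 0) (at_right 0)"
  proof (rule Lim_null_comparison)
    show "eventually (\<lambda>\<epsilon>. norm (of_real (1 / sqrt \<epsilon>) * (\<Sum>m. of_real (arctan_coeff \<epsilon> m) * x (2*m+1)) - x 1)
        \<le> 2 * C * K^3 * \<epsilon>) (at_right 0)"
      using eventually_small_at_right_0[of K] by eventually_elim (use estimate(2) in auto)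
    show "((\<lambda>\<epsilon>::real. 2 * C * K^3 * \<epsilon>) \<longlongrightarrow> 0) (at_right 0)"
      using tendsto_mult[OF tendsto_const[of "2 * C * K^3"] tendsto_ident_at[of 0 "{0<..}"]] by simp
  qed
  then show "((\<lambda>\<epsilon>. of_real (1 / sqrt \<epsilon>) * (\<Sum>m. of_real (arctan_coeff \<epsilon> m) * x (2*m+1))) \<longlongrightarrow> x 1) (at_right 0)"
    by (simp add: LIM_zero_iff)
qed

definition coeff_norm :: "nat \<Rightarrow> (nat \<Rightarrow> complex) \<Rightarrow> real" where
  "coeff_norm n v = (\<Sum>k\<le>n. cmod (v k))"

lemma sum_atMost_shift_le:
  fixes f :: "nat \<Rightarrow> real"
  assumes "\<And>k. f k \<ge> 0"
  shows "(\<Sum>k\<le>n. (if k < n then f (Suc k) else 0)) \<le> (\<Sum>k\<le>n. f k)"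
proof (cases n)
  case (Suc m)
  have "(\<Sum>k\<le>Suc m. (if k < Suc m then f (Suc k) else 0)) = (\<Sum>k\<le>m. f (Suc k))"
    by (simp add: sum.atMost_Suc)
  also have "\<dots> \<le> f 0 + (\<Sum>k\<le>m. f (Suc k))" using assms by simp
  also have "\<dots> = (\<Sum>k\<le>Suc m. f k)" by (rule sum.atMost_Suc_shift[symmetric])
  finally show ?thesis using Suc by simp
qed (use assms in simp)

lemma t_matrix_coeff_norm_le:
  assumes a: "a \<ge> 0"
  shows "coeff_norm n (t_matrix a n v) \<le> (a + 2 * (real n + 1)) * coeff_norm n v"
proof -
  have "cmod (t_matrix a n v k) \<le> a * cmod (v k) + 2 * (real n + 1) * (if k < n then cmod (v (Suc k)) else 0)"
    for k
  proof -
    have "cmod (t_matrix a n v k)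
        \<le> cmod (\<i> * of_real a * v k) + cmod (if k < n then 2 * \<i> * of_nat (Suc k) * v (Suc k) else 0)"
      unfolding t_matrix_def by (rule norm_triangle_ineq4)
    moreover have "cmod (\<i> * of_real a * v k) = a * cmod (v k)" using a by (simp add: norm_mult)
    moreover have "cmod (if k < n then 2 * \<i> * of_nat (Suc k) * v (Suc k) else 0)
        \<le> 2 * (real n + 1) * (if k < n then cmod (v (Suc k)) else 0)"
    proof (cases "k < n")
      case True
      have "cmod (2 * \<i> * of_nat (Suc k) * v (Suc k)) = 2 * real (Suc k) * cmod (v (Suc k))"
        by (simp only: norm_mult norm_of_nat) simp
      also have "\<dots> \<le> 2 * (real n + 1) * cmod (v (Suc k))"
        using True by (intro mult_right_mono) auto
      finally show ?thesis using True by simp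
    qed simp
    ultimately show ?thesis by linarith
  qed
  then have "coeff_norm n (t_matrix a n v)
      \<le> (\<Sum>k\<le>n. a * cmod (v k) + 2 * (real n + 1) * (if k < n then cmod (v (Suc k)) else 0))"
    unfolding coeff_norm_def by (intro sum_mono)
  also have "\<dots> = a * coeff_norm n v + 2 * (real n + 1) * (\<Sum>k\<le>n. (if k < n then cmod (v (Suc k)) else 0))"
    by (simp add: sum.distrib sum_distrib_left coeff_norm_def)
  also have "\<dots> \<le> a * coeff_norm n v + 2 * (real n + 1) * coeff_norm n v"
    unfolding coeff_norm_def by (intro add_left_mono mult_left_mono sum_atMost_shift_le) auto
  finally show ?thesis by (simp add: algebra_simps)
qed

lemma t_coeffs_power: "(t_coeffs ^^ j) V i = (t_matrix (snd i) (fst i) ^^ j) (V i)"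
  by (induction j) (auto simp: t_coeffs_def)

lemma t_coeffs_power_bound:
  assumes "admissible F" "i \<in> F" "k \<le> fst i"
  shows "cmod ((t_coeffs ^^ j) V i k) \<le> coeff_norm (fst i) (V i) * (snd i + 2 * (real (fst i) + 1)) ^ j"
proof -
  have a: "snd i \<ge> 0" using assms(1,2) by (auto simp: admissible_def less_imp_le)
  have "coeff_norm (fst i) ((t_matrix (snd i) (fst i) ^^ j) (V i))
      \<le> (snd i + 2 * (real (fst i) + 1)) ^ j * coeff_norm (fst i) (V i)"
  proof (induction j)
    case (Suc j)
    have "coeff_norm (fst i) ((t_matrix (snd i) (fst i) ^^ Suc j) (V i))
        \<le> (snd i + 2 * (real (fst i) + 1)) * coeff_norm (fst i) ((t_matrix (snd i) (fst i) ^^ j) (V i))"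
      using t_matrix_coeff_norm_le[OF a] by simp
    also have "\<dots> \<le> (snd i + 2 * (real (fst i) + 1)) * ((snd i + 2 * (real (fst i) + 1)) ^ j * coeff_norm (fst i) (V i))"
      using a by (intro mult_left_mono Suc) auto
    finally show ?case by simp
  qed simp
  moreover have "cmod ((t_coeffs ^^ j) V i k) \<le> coeff_norm (fst i) ((t_coeffs ^^ j) V i)"
    unfolding coeff_norm_def using assms(3) by (intro member_le_sum) auto
  ultimately show ?thesis by (simp add: t_coeffs_power mult.commute)
qed

definition S_coeffs :: "real \<Rightarrow> (nat \<times> real \<Rightarrow> nat \<Rightarrow> complex) \<Rightarrow> nat \<times> real \<Rightarrow> nat \<Rightarrow> complex" where
  "S_coeffs \<epsilon> V i k = - of_real (1 / sqrt \<epsilon>) * (\<Sum>m. of_real (arctan_coeff \<epsilon> m) * (t_coeffs ^^ (2*m+1)) V i k)"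

lemma S_coeffs_series:
  assumes "admissible F" "i \<in> F" "k \<le> fst i"
  shows "eventually (\<lambda>\<epsilon>. summable (\<lambda>m. of_real (arctan_coeff \<epsilon> m) * (t_coeffs ^^ (2*m+1)) V i k)) (at_right 0)"
    and "((\<lambda>\<epsilon>. S_coeffs \<epsilon> V i k) \<longlongrightarrow> - t_coeffs V i k) (at_right 0)"
proof -
  have "snd i > 0" using assms by (auto simp: admissible_def)
  then have K: "snd i + 2 * (real (fst i) + 1) \<ge> 0" by simp
  have C: "coeff_norm (fst i) (V i) \<ge> 0" unfolding coeff_norm_def by (intro sum_nonneg) auto
  note series = tendsto_arctan_series[of "\<lambda>j. (t_coeffs ^^ j) V i k", OF t_coeffs_power_bound[OF assms] C K]
  show "eventually (\<lambda>\<epsilon>. summable (\<lambda>m. of_real (arctan_coeff \<epsilon> m) * (t_coeffs ^^ (2*m+1)) V i k)) (at_right 0)"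
    by (rule series(1))
  show "((\<lambda>\<epsilon>. S_coeffs \<epsilon> V i k) \<longlongrightarrow> - t_coeffs V i k) (at_right 0)"
    using tendsto_minus[OF series(2)] by (simp add: S_coeffs_def)
qed

section \<open>Convergence in \<open>L\<^sup>2\<close>\<close>

definition l2_norm_sq :: "fn \<Rightarrow> real" where
  "l2_norm_sq f = (LINT x|lborel. (cmod (f x))\<^sup>2)"

lemma l2_norm_sq_nonneg: "l2_norm_sq f \<ge> 0"
  unfolding l2_norm_sq_def by (rule integral_nonneg_AE) auto

lemma l2_norm_eq_sqrt_l2_norm_sq: "l2_norm f = sqrt (l2_norm_sq f)"
  by (simp add: l2_norm_def l2_norm_sq_def)

lemma tendsto_l2_norm_iff_l2_norm_sq: "(\<lambda>N. l2_norm (f N)) \<longlonglongrightarrow> 0 \<longleftrightarrow> (\<lambda>N. l2_norm_sq (f N)) \<longlonglongrightarrow> 0"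
proof
  assume "(\<lambda>N. l2_norm (f N)) \<longlonglongrightarrow> 0"
  from tendsto_power[OF this, of 2] show "(\<lambda>N. l2_norm_sq (f N)) \<longlonglongrightarrow> 0"
    by (simp add: l2_norm_eq_sqrt_l2_norm_sq l2_norm_sq_nonneg)
next
  assume "(\<lambda>N. l2_norm_sq (f N)) \<longlonglongrightarrow> 0"
  from tendsto_real_sqrt[OF this] show "(\<lambda>N. l2_norm (f N)) \<longlonglongrightarrow> 0"
    by (simp add: l2_norm_eq_sqrt_l2_norm_sq)
qed

lemma l2_norm_sq_add_le:
  assumes "L2 f" "L2 g" shows "l2_norm_sq (\<lambda>x. f x + g x) \<le> 2 * l2_norm_sq f + 2 * l2_norm_sq g"
proof -
  have "integrable lborel (\<lambda>x. (cmod (f x))\<^sup>2)" "integrable lborel (\<lambda>x. (cmod (g x))\<^sup>2)"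
    "integrable lborel (\<lambda>x. (cmod (f x + g x))\<^sup>2)"
    using assms L2_add[OF assms] by (auto simp: L2_def)
  then have "l2_norm_sq (\<lambda>x. f x + g x) \<le> (LINT x|lborel. 2 * (cmod (f x))\<^sup>2 + 2 * (cmod (g x))\<^sup>2)"
    unfolding l2_norm_sq_def by (intro integral_mono cmod_add_squared_le) auto
  also have "\<dots> = 2 * l2_norm_sq f + 2 * l2_norm_sq g"
    unfolding l2_norm_sq_def using \<open>integrable lborel (\<lambda>x. (cmod (f x))\<^sup>2)\<close>
      \<open>integrable lborel (\<lambda>x. (cmod (g x))\<^sup>2)\<close> by simp
  finally show ?thesis .
qed

lemma l2_norm_sq_cmult: "l2_norm_sq (\<lambda>x. c * f x) = (cmod c)\<^sup>2 * l2_norm_sq f"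
  unfolding l2_norm_sq_def by (simp add: norm_mult power_mult_distrib)

lemma l2_norm_sq_cong: "L2 f \<Longrightarrow> L2 g \<Longrightarrow> AE x in lborel. f x = g x \<Longrightarrow> l2_norm_sq f = l2_norm_sq g"
  unfolding l2_norm_sq_def L2_def by (intro integral_cong_AE) (auto elim!: eventually_mono)

lemma ae_zero_if_l2_norm_sq_zero: "L2 f \<Longrightarrow> l2_norm_sq f = 0 \<Longrightarrow> AE x in lborel. f x = 0"
  using integral_nonneg_eq_0_iff_AE[of lborel "\<lambda>x. (cmod (f x))\<^sup>2"]
  unfolding L2_def l2_norm_sq_def by auto

lemma tendsto_l2_norm_sq_sum:
  assumes "finite I" "\<And>i N. i \<in> I \<Longrightarrow> L2 (h i N)" "\<And>i. i \<in> I \<Longrightarrow> (\<lambda>N. l2_norm_sq (h i N)) \<longlonglongrightarrow> 0"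
  shows "(\<lambda>N. l2_norm_sq (\<lambda>x. \<Sum>i\<in>I. h i N x)) \<longlonglongrightarrow> 0"
  using assms
proof (induction I rule: finite_induct)
  case empty then show ?case by (simp add: l2_norm_sq_def)
next
  case (insert j I)
  have IH: "(\<lambda>N. l2_norm_sq (\<lambda>x. \<Sum>i\<in>I. h i N x)) \<longlonglongrightarrow> 0"
    using insert by auto
  have L: "L2 (h j N)" "L2 (\<lambda>x. \<Sum>i\<in>I. h i N x)" for N
    using insert by (auto intro!: L2_sum)
  have "(\<lambda>N. 2 * l2_norm_sq (h j N) + 2 * l2_norm_sq (\<lambda>x. \<Sum>i\<in>I. h i N x)) \<longlonglongrightarrow> 2 * 0 + 2 * 0"
    using insert IH by (intro tendsto_intros) auto
  then have "(\<lambda>N. 2 * l2_norm_sq (h j N) + 2 * l2_norm_sq (\<lambda>x. \<Sum>i\<in>I. h i N x)) \<longlonglongrightarrow> 0"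
    by simp
  then have "(\<lambda>N. l2_norm_sq (\<lambda>x. h j N x + (\<Sum>i\<in>I. h i N x))) \<longlonglongrightarrow> 0"
    by (rule Lim_null_comparison[rotated])
       (auto intro!: always_eventually l2_norm_sq_add_le L simp: l2_norm_sq_nonneg)
  then show ?case using insert by simp
qed

lemma tendsto_l2_norm_sq_gauss_comb:
  assumes F: "admissible F" and D: "\<And>i k. i \<in> F \<Longrightarrow> k \<le> fst i \<Longrightarrow> (\<lambda>N. D N i k) \<longlonglongrightarrow> 0"
  shows "(\<lambda>N. l2_norm_sq (gauss_comb p F (D N))) \<longlonglongrightarrow> 0"
proof -
  have a: "finite F" "\<And>i. i \<in> F \<Longrightarrow> snd i > 0" using F by (auto simp: admissible_def)
  have "(\<lambda>N. (cmod (D N i k))\<^sup>2 * l2_norm_sq (\<lambda>x. of_real (gauss_mono p (snd i) k x))) \<longlonglongrightarrow> 0"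
    if "i \<in> F" "k \<le> fst i" for i k
  proof (rule tendsto_mult_left_zero)
    show "(\<lambda>N. (cmod (D N i k))\<^sup>2) \<longlonglongrightarrow> 0"
      using tendsto_power[OF tendsto_norm[OF D[OF that]], of 2] by simp
  qed
  then have "(\<lambda>N. l2_norm_sq (\<lambda>x. \<Sum>i\<in>F. \<Sum>k\<le>fst i. D N i k * of_real (gauss_mono p (snd i) k x))) \<longlonglongrightarrow> 0"
    by (intro tendsto_l2_norm_sq_sum a L2_sum L2_cmult L2_gauss_mono) (auto simp: l2_norm_sq_cmult)
  then show ?thesis by (simp add: gauss_comb_def[abs_def])
qed

lemma L2_limit_unique:
  assumes L2: "\<And>N. L2 (\<sigma> N)" "L2 s" "L2 s'"
    and lim: "(\<lambda>N. l2_norm (\<lambda>x. \<sigma> N x - s x)) \<longlonglongrightarrow> 0" "(\<lambda>N. l2_norm (\<lambda>x. \<sigma> N x - s' x)) \<longlonglongrightarrow> 0"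
  shows "AE x in lborel. s x = s' x"
proof -
  have "l2_norm_sq (\<lambda>x. s' x - s x)
      \<le> 2 * l2_norm_sq (\<lambda>x. \<sigma> N x - s x) + 2 * l2_norm_sq (\<lambda>x. (-1) * (\<sigma> N x - s' x))" for N
  proof -
    have "l2_norm_sq (\<lambda>x. s' x - s x) = l2_norm_sq (\<lambda>x. (\<sigma> N x - s x) + (-1) * (\<sigma> N x - s' x))"
      by (simp add: algebra_simps)
    also have "\<dots> \<le> 2 * l2_norm_sq (\<lambda>x. \<sigma> N x - s x) + 2 * l2_norm_sq (\<lambda>x. (-1) * (\<sigma> N x - s' x))"
      by (intro l2_norm_sq_add_le L2_diff L2_cmult L2)
    finally show ?thesis .
  qed
  moreover have "(\<lambda>N. 2 * l2_norm_sq (\<lambda>x. \<sigma> N x - s x) + 2 * l2_norm_sq (\<lambda>x. (-1) * (\<sigma> N x - s' x)))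
      \<longlonglongrightarrow> 2 * 0 + 2 * 0"
    using lim unfolding tendsto_l2_norm_iff_l2_norm_sq l2_norm_sq_cmult by (intro tendsto_intros) auto
  ultimately have "l2_norm_sq (\<lambda>x. s' x - s x) \<le> 2 * 0 + 2 * 0"
    using LIMSEQ_le_const by blast
  then have "AE x in lborel. s' x - s x = 0"
    using l2_norm_sq_nonneg ae_zero_if_l2_norm_sq_zero[OF L2_diff[OF L2(3,2)]] by (simp add: order_antisym)
  then show ?thesis by auto
qed

section \<open>\<open>S\<^sub>\<epsilon>\<close> on Gaussian combinations\<close>

lemma S_rel_L2: "S_rel A P \<epsilon> f g \<Longrightarrow> L2 g"
  unfolding S_rel_def by blast

lemma rel_pow_L2: "rel_pow A j f h \<Longrightarrow> L2 h"
  by (induction j arbitrary: f) auto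

text \<open>The hypotheses shared by \<open>t\<close> on even and \<open>t\<^sup>*\<close> on odd Gaussian combinations.\<close>

locale gauss_comb_operator =
  fixes A :: "fn \<Rightarrow> fn \<Rightarrow> bool" and p :: nat and F :: "(nat \<times> real) set"
  assumes admissible: "admissible F"
    and maps: "\<And>V. A (gauss_comb p F V) (gauss_comb p F (t_coeffs V))"
    and unique: "\<And>V f h. A f h \<Longrightarrow> AE x in lborel. f x = gauss_comb p F V x
        \<Longrightarrow> AE x in lborel. h x = gauss_comb p F (t_coeffs V) x"
    and L2_image: "\<And>f h. A f h \<Longrightarrow> L2 h"
begin

lemma rel_pow: "rel_pow A j (gauss_comb p F V) (gauss_comb p F ((t_coeffs ^^ j) V))"
proof (induction j arbitrary: V)
  case 0 then show ?case using L2_gauss_comb[OF admissible] by (simp add: ae_eq_def)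
next
  case (Suc j)
  have "rel_pow A j (gauss_comb p F (t_coeffs V)) (gauss_comb p F ((t_coeffs ^^ j) (t_coeffs V)))"
    by (rule Suc)
  then show ?case using maps[of V] by (auto simp: funpow_Suc_right simp del: funpow.simps)
qed

lemma rel_pow_unique:
  "rel_pow A j f h \<Longrightarrow> AE x in lborel. f x = gauss_comb p F V x
    \<Longrightarrow> AE x in lborel. h x = gauss_comb p F ((t_coeffs ^^ j) V) x"
proof (induction j arbitrary: f V)
  case 0 then show ?case by (auto simp: ae_eq_def elim: eventually_mono[OF eventually_conj])
next
  case (Suc j)
  then obtain m where m: "A f m" "rel_pow A j m h" by auto
  from Suc.IH[OF m(2) unique[OF m(1) Suc.prems(2)]] show ?case
    by (simp add: funpow_Suc_right del: funpow.simps)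
qed

lemma some_rel: "L2 (SOME h. A (gauss_comb p F V) h)"
  and some_rel_ae_eq: "AE x in lborel. (SOME h. A (gauss_comb p F V) h) x = gauss_comb p F (t_coeffs V) x"
proof -
  have h: "A (gauss_comb p F V) (SOME h. A (gauss_comb p F V) h)" by (rule someI[where P="A (gauss_comb p F V)", OF maps])
  show "L2 (SOME h. A (gauss_comb p F V) h)" by (rule L2_image[OF h])
  show "AE x in lborel. (SOME h. A (gauss_comb p F V) h) x = gauss_comb p F (t_coeffs V) x"
    by (rule unique[OF h]) simp
qed

context
  fixes \<epsilon> :: real and V :: "nat \<times> real \<Rightarrow> nat \<Rightarrow> complex"
  assumes summable: "\<And>i k. i \<in> F \<Longrightarrow> k \<le> fst i
    \<Longrightarrow> summable (\<lambda>m. of_real (arctan_coeff \<epsilon> m) * (t_coeffs ^^ (2*m+1)) V i k)"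
begin

definition partial_sum :: "nat \<Rightarrow> fn" where
  "partial_sum N x = (\<Sum>n\<le>N. of_real (arctan_coeff \<epsilon> n) * gauss_comb p F ((t_coeffs ^^ (2*n+1)) V) x)"

definition series_sum :: fn where
  "series_sum = gauss_comb p F (\<lambda>i k. \<Sum>m. of_real (arctan_coeff \<epsilon> m) * (t_coeffs ^^ (2*m+1)) V i k)"

lemma L2_partial_sum: "L2 (partial_sum N)"
  unfolding partial_sum_def[abs_def] using admissible by (intro L2_sum L2_cmult L2_gauss_comb) auto

lemma tendsto_partial_sum: "(\<lambda>N. l2_norm (\<lambda>x. partial_sum N x - series_sum x)) \<longlonglongrightarrow> 0"
proof -
  have "(\<lambda>x. partial_sum N x - series_sum x) = gauss_comb p F (\<lambda>i k.
      (\<Sum>m\<le>N. of_real (arctan_coeff \<epsilon> m) * (t_coeffs ^^ (2*m+1)) V i k)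
      - (\<Sum>m. of_real (arctan_coeff \<epsilon> m) * (t_coeffs ^^ (2*m+1)) V i k))" for N
    by (simp add: fun_eq_iff partial_sum_def series_sum_def gauss_comb_sum gauss_comb_diff)
  moreover have "(\<lambda>N. l2_norm_sq (gauss_comb p F (\<lambda>i k.
      (\<Sum>m\<le>N. of_real (arctan_coeff \<epsilon> m) * (t_coeffs ^^ (2*m+1)) V i k)
      - (\<Sum>m. of_real (arctan_coeff \<epsilon> m) * (t_coeffs ^^ (2*m+1)) V i k)))) \<longlonglongrightarrow> 0"
    by (intro tendsto_l2_norm_sq_gauss_comb admissible LIM_zero summable_LIMSEQ' summable)
  ultimately show ?thesis by (simp add: tendsto_l2_norm_iff_l2_norm_sq)
qed

lemma gauss_comb_S_coeffs: "gauss_comb p F (S_coeffs \<epsilon> V) x = - of_real (1 / sqrt \<epsilon>) * series_sum x"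
  unfolding series_sum_def gauss_comb_cmult S_coeffs_def[abs_def] by simp

lemma S_rel_gauss_comb:
  assumes "P (gauss_comb p F V)"
  shows "S_rel A P \<epsilon> (gauss_comb p F V) (gauss_comb p F (S_coeffs \<epsilon> V))"
  unfolding S_rel_def
proof (intro conjI exI[of _ "\<lambda>n. gauss_comb p F ((t_coeffs ^^ (2*n+1)) V)"] exI[of _ series_sum] allI)
  show "(\<lambda>N. l2_norm (\<lambda>x. (\<Sum>n\<le>N. of_real ((-1)^n / real (2*n+1) * (sqrt \<epsilon>)^(2*n+1))
      * gauss_comb p F ((t_coeffs ^^ (2*n+1)) V) x) - series_sum x)) \<longlonglongrightarrow> 0"
    using tendsto_partial_sum by (simp add: partial_sum_def arctan_coeff_def)
  show "AE x in lborel. gauss_comb p F (S_coeffs \<epsilon> V) x = - of_real (1 / sqrt \<epsilon>) * series_sum x"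
    by (simp add: gauss_comb_S_coeffs)
  show "rel_pow A (2*n+1) (gauss_comb p F V) (gauss_comb p F ((t_coeffs ^^ (2*n+1)) V))" for n
    by (rule rel_pow)
  show "L2 series_sum" "L2 (gauss_comb p F (S_coeffs \<epsilon> V))"
    unfolding series_sum_def by (rule L2_gauss_comb[OF admissible])+
qed (rule assms)

lemma S_rel_gauss_comb_unique:
  assumes "S_rel A P \<epsilon> (gauss_comb p F V) g"
  shows "AE x in lborel. g x = gauss_comb p F (S_coeffs \<epsilon> V) x"
proof -
  obtain u s where u: "\<And>n. rel_pow A (2*n+1) (gauss_comb p F V) (u n)" and s: "L2 s"
    and lim: "(\<lambda>N. l2_norm (\<lambda>x. (\<Sum>n\<le>N. of_real (arctan_coeff \<epsilon> n) * u n x) - s x)) \<longlonglongrightarrow> 0"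
    and g: "AE x in lborel. g x = - of_real (1 / sqrt \<epsilon>) * s x"
    using assms unfolding S_rel_def arctan_coeff_def by blast
  have "AE x in lborel. \<forall>n. u n x = gauss_comb p F ((t_coeffs ^^ (2*n+1)) V) x"
    using rel_pow_unique[OF u] by (simp add: AE_all_countable)
  then have ae: "AE x in lborel. (\<Sum>n\<le>N. of_real (arctan_coeff \<epsilon> n) * u n x) - s x = partial_sum N x - s x" for N
    by eventually_elim (simp add: partial_sum_def)
  have L2_sum_u: "L2 (\<lambda>x. (\<Sum>n\<le>N. of_real (arctan_coeff \<epsilon> n) * u n x) - s x)" for N
    using rel_pow_L2[OF u] s by (intro L2_diff L2_sum L2_cmult) auto
  have "l2_norm (\<lambda>x. (\<Sum>n\<le>N. of_real (arctan_coeff \<epsilon> n) * u n x) - s x)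
      = l2_norm (\<lambda>x. partial_sum N x - s x)" for N
    unfolding l2_norm_eq_sqrt_l2_norm_sq l2_norm_sq_cong[OF L2_sum_u L2_diff[OF L2_partial_sum s] ae] ..
  then have "(\<lambda>N. l2_norm (\<lambda>x. partial_sum N x - s x)) \<longlonglongrightarrow> 0"
    using lim by simp
  then have "AE x in lborel. series_sum x = s x"
    by (intro L2_limit_unique[OF L2_partial_sum _ s tendsto_partial_sum])
       (simp add: series_sum_def L2_gauss_comb admissible)
  with g show ?thesis
    by eventually_elim (simp add: gauss_comb_S_coeffs)
qed

end

lemma eventually_some_S_rel:
  assumes "P (gauss_comb p F V)"
  shows "eventually (\<lambda>\<epsilon>. L2 (SOME g. S_rel A P \<epsilon> (gauss_comb p F V) g) \<and>
    (AE x in lborel. (SOME g. S_rel A P \<epsilon> (gauss_comb p F V) g) x = gauss_comb p F (S_coeffs \<epsilon> V) x)) (at_right 0)"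
proof -
  have "finite (Sigma F (\<lambda>i. {..fst i}))" using admissible by (auto simp: admissible_def)
  then have "eventually (\<lambda>\<epsilon>. \<forall>ik\<in>Sigma F (\<lambda>i. {..fst i}).
      summable (\<lambda>m. of_real (arctan_coeff \<epsilon> m) * (t_coeffs ^^ (2*m+1)) V (fst ik) (snd ik))) (at_right 0)"
  proof (rule eventually_ball_finite, intro ballI)
    fix ik assume "ik \<in> Sigma F (\<lambda>i. {..fst i})"
    then show "eventually (\<lambda>\<epsilon>. summable (\<lambda>m. of_real (arctan_coeff \<epsilon> m) * (t_coeffs ^^ (2*m+1)) V (fst ik) (snd ik)))
        (at_right 0)"
      by (intro S_coeffs_series(1)[OF admissible]) auto
  qed
  then show ?thesis
  proof eventually_elim
    case (elim \<epsilon>)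
    have summable: "summable (\<lambda>m. of_real (arctan_coeff \<epsilon> m) * (t_coeffs ^^ (2*m+1)) V i k)"
      if "i \<in> F" "k \<le> fst i" for i k
      using elim[rule_format, of "(i, k)"] that by simp
    have "S_rel A P \<epsilon> (gauss_comb p F V) (SOME g. S_rel A P \<epsilon> (gauss_comb p F V) g)"
      by (rule someI[where P="S_rel A P \<epsilon> (gauss_comb p F V)", OF S_rel_gauss_comb])
         (use summable assms in auto)
    moreover have "AE x in lborel. g x = gauss_comb p F (S_coeffs \<epsilon> V) x"
      if "S_rel A P \<epsilon> (gauss_comb p F V) g" for g
      by (rule S_rel_gauss_comb_unique[OF _ that]) (use summable in auto)
    ultimately show ?case
      using S_rel_L2 by blast
  qed
qed

end

section \<open>Limits of the forms\<close>

lemma l2_inner_commute: "l2_inner f g = cnj (l2_inner g f)"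
  unfolding l2_inner_def Bochner_Integration.integral_cnj[symmetric] by (simp add: mult.commute)

lemma tendsto_l2_inner_swap:
  "((\<lambda>\<epsilon>. l2_inner \<psi> (G \<epsilon>)) \<longlongrightarrow> l) F \<Longrightarrow> ((\<lambda>\<epsilon>. l2_inner (G \<epsilon>) \<psi>) \<longlongrightarrow> cnj l) F"
  by (subst l2_inner_commute) (rule tendsto_cnj)

lemma l2_inner_cong_right:
  assumes "L2 \<psi>" "L2 g" "L2 h" "AE x in lborel. g x = h x"
  shows "l2_inner \<psi> g = l2_inner \<psi> h"
proof -
  have [measurable]: "\<psi> \<in> borel_measurable borel" "g \<in> borel_measurable borel" "h \<in> borel_measurable borel"
    using assms(1-3) by (auto simp: L2_def)
  show ?thesis unfolding l2_inner_def
    by (rule integral_cong_AE) (use assms(4) in \<open>auto elim!: eventually_mono\<close>)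
qed

lemma l2_inner_gauss_comb:
  assumes \<psi>: "L2 \<psi>" and F: "admissible F"
  shows "l2_inner \<psi> (gauss_comb p F W)
    = (\<Sum>i\<in>F. \<Sum>k\<le>fst i. W i k * l2_inner \<psi> (\<lambda>x. of_real (gauss_mono p (snd i) k x)))"
proof -
  have int: "integrable lborel (\<lambda>x. W i k * (cnj (\<psi> x) * of_real (gauss_mono p (snd i) k x)))" if "i \<in> F" for i k
    using F that by (intro integrable_mult_right L2_integrable_mult L2_cnj \<psi> L2_gauss_mono) (auto simp: admissible_def)
  have "l2_inner \<psi> (gauss_comb p F W)
      = (LINT x|lborel. (\<Sum>i\<in>F. \<Sum>k\<le>fst i. W i k * (cnj (\<psi> x) * of_real (gauss_mono p (snd i) k x))))"
    unfolding l2_inner_def gauss_comb_def by (simp add: sum_distrib_left algebra_simps)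
  also have "\<dots> = (\<Sum>i\<in>F. \<Sum>k\<le>fst i. LINT x|lborel. W i k * (cnj (\<psi> x) * of_real (gauss_mono p (snd i) k x)))"
    using int by (simp add: Bochner_Integration.integral_sum integrable_sum)
  also have "\<dots> = (\<Sum>i\<in>F. \<Sum>k\<le>fst i. W i k * l2_inner \<psi> (\<lambda>x. of_real (gauss_mono p (snd i) k x)))"
    unfolding l2_inner_def by simp
  finally show ?thesis .
qed

lemma (in gauss_comb_operator) tendsto_l2_inner_some_S_rel:
  assumes P: "P (gauss_comb p F V)" and \<psi>: "L2 \<psi>"
  shows "((\<lambda>\<epsilon>. l2_inner \<psi> (SOME g. S_rel A P \<epsilon> (gauss_comb p F V) g))
    \<longlongrightarrow> - l2_inner \<psi> (SOME h. A (gauss_comb p F V) h)) (at_right 0)"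
proof -
  let ?c = "\<lambda>i k. l2_inner \<psi> (\<lambda>x. of_real (gauss_mono p (snd i) k x))"
  have "eventually (\<lambda>\<epsilon>. (\<Sum>i\<in>F. \<Sum>k\<le>fst i. S_coeffs \<epsilon> V i k * ?c i k)
      = l2_inner \<psi> (SOME g. S_rel A P \<epsilon> (gauss_comb p F V) g)) (at_right 0)"
    using eventually_some_S_rel[where P=P and V=V, OF P]
  proof eventually_elim
    case (elim \<epsilon>)
    have "l2_inner \<psi> (SOME g. S_rel A P \<epsilon> (gauss_comb p F V) g) = l2_inner \<psi> (gauss_comb p F (S_coeffs \<epsilon> V))"
      by (rule l2_inner_cong_right[OF \<psi>]) (use elim L2_gauss_comb[OF admissible] in auto)
    then show ?case using l2_inner_gauss_comb[OF \<psi> admissible] by simp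
  qed
  moreover have "((\<lambda>\<epsilon>. \<Sum>i\<in>F. \<Sum>k\<le>fst i. S_coeffs \<epsilon> V i k * ?c i k)
      \<longlongrightarrow> (\<Sum>i\<in>F. \<Sum>k\<le>fst i. - t_coeffs V i k * ?c i k)) (at_right 0)"
    by (intro tendsto_sum tendsto_mult tendsto_const S_coeffs_series(2)[OF admissible]) auto
  moreover have "(\<Sum>i\<in>F. \<Sum>k\<le>fst i. - t_coeffs V i k * ?c i k) = - l2_inner \<psi> (SOME h. A (gauss_comb p F V) h)"
    using l2_inner_cong_right[OF \<psi> some_rel L2_gauss_comb[OF admissible] some_rel_ae_eq]
      l2_inner_gauss_comb[OF \<psi> admissible] by (simp add: sum_negf)
  ultimately show ?thesis by (simp add: tendsto_cong)
qed

lemma gauss_comb_operator_t: assumes F: "admissible F" shows "gauss_comb_operator t_rel 0 F"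
proof unfold_locales
  show "L2 h" if "t_rel f h" for f h using that by (auto simp: t_rel_def qinv_rel_def)
qed (use F t_rel_gauss_comb t_rel_gauss_comb_unique in blast)+

lemma gauss_comb_operator_tadj: assumes F: "admissible F" shows "gauss_comb_operator tadj_rel 1 F"
proof unfold_locales
  show "L2 h" if "tadj_rel f h" for f h using that by (auto simp: tadj_rel_def)
qed (use F tadj_rel_gauss_comb tadj_rel_gauss_comb_unique in blast)+

lemma gauss_comb_monomials:
  fixes F :: "(nat \<times> real) set" and p :: nat and c :: "nat \<times> real \<Rightarrow> complex"
  assumes "finite F" "\<forall>(n,a)\<in>F. 0 < a \<and> a < 1"
  shows "admissible F"
    and "(\<lambda>x. \<Sum>(n,a)\<in>F. c (n,a) * of_real (x^(2*n+p) * exp (- a * x\<^sup>2 / 2)))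
      = gauss_comb p F (\<lambda>i k. if k = fst i then c i else 0)"
proof -
  show "admissible F" using assms by (auto simp: admissible_def)
  have "(\<Sum>k\<le>fst i. (if k = fst i then c i else 0) * of_real (gauss_mono p (snd i) k x))
      = (\<Sum>k\<le>fst i. if k = fst i then c i * of_real (gauss_mono p (snd i) k x) else 0)" for i x
    by (intro sum.cong) auto
  then have "(\<Sum>k\<le>fst i. (if k = fst i then c i else 0) * of_real (gauss_mono p (snd i) k x))
      = c i * of_real (gauss_mono p (snd i) (fst i) x)" for i x
    by (simp add: sum.delta)
  then show "(\<lambda>x. \<Sum>(n,a)\<in>F. c (n,a) * of_real (x^(2*n+p) * exp (- a * x\<^sup>2 / 2)))
      = gauss_comb p F (\<lambda>i k. if k = fst i then c i else 0)"
    by (auto simp: fun_eq_iff gauss_comb_def gauss_mono_def case_prod_beta intro!: sum.cong)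
qed

lemma M0_gauss_comb: "\<phi> \<in> M0 \<Longrightarrow> \<exists>F V. admissible F \<and> \<phi> = gauss_comb 0 F V"
  unfolding M0_def using gauss_comb_monomials(1) gauss_comb_monomials(2)[where p=0] by fastforce

lemma M1_gauss_comb: "\<phi> \<in> M1 \<Longrightarrow> \<exists>F V. admissible F \<and> \<phi> = gauss_comb 1 F V"
  unfolding M1_def using gauss_comb_monomials(1) gauss_comb_monomials(2)[where p=1] by fastforce

lemma L2_M0: "\<phi> \<in> M0 \<Longrightarrow> L2 \<phi>"
  using M0_gauss_comb L2_gauss_comb by blast

lemma L2_M1: "\<phi> \<in> M1 \<Longrightarrow> L2 \<phi>"
  using M1_gauss_comb L2_gauss_comb by blast

lemma tendsto_l2_inner_S_op:
  assumes "\<phi> \<in> M0" "L2 \<psi>"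
  shows "((\<lambda>\<epsilon>. l2_inner \<psi> (S_op \<epsilon> \<phi>)) \<longlongrightarrow> - l2_inner \<psi> (t_op \<phi>)) (at_right 0)"
proof -
  obtain F V where F: "admissible F" and \<phi>: "\<phi> = gauss_comb 0 F V" using M0_gauss_comb[OF assms(1)] by blast
  interpret gauss_comb_operator t_rel 0 F by (rule gauss_comb_operator_t[OF F])
  show ?thesis
    unfolding S_op_def t_op_def \<phi> by (rule tendsto_l2_inner_some_S_rel[where P=L2_even and V=V, OF L2_even_gauss_comb[OF F] assms(2)])
qed

lemma tendsto_l2_inner_Sadj_op:
  assumes "\<phi> \<in> M1" "L2 \<psi>"
  shows "((\<lambda>\<epsilon>. l2_inner \<psi> (Sadj_op \<epsilon> \<phi>)) \<longlongrightarrow> - l2_inner \<psi> (tadj_op \<phi>)) (at_right 0)"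
proof -
  obtain F V where F: "admissible F" and \<phi>: "\<phi> = gauss_comb 1 F V" using M1_gauss_comb[OF assms(1)] by blast
  interpret gauss_comb_operator tadj_rel 1 F by (rule gauss_comb_operator_tadj[OF F])
  show ?thesis
    unfolding Sadj_op_def tadj_op_def \<phi> by (rule tendsto_l2_inner_some_S_rel[where P=L2_odd and V=V, OF L2_odd_gauss_comb[OF F] assms(2)])
qed

theorem theorem5p1:
  assumes "\<psi>0 \<in> M0" and "\<psi>1 \<in> M1" and "\<phi>0 \<in> M0" and "\<phi>1 \<in> M1"
  shows "((\<lambda>\<epsilon>. t_eps \<epsilon> \<psi>0 \<psi>1 \<phi>0 \<phi>1) \<longlongrightarrow> t_AB \<psi>0 \<psi>1 \<phi>0 \<phi>1) (at_right 0)"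
proof -
  have "((\<lambda>\<epsilon>. t_eps \<epsilon> \<psi>0 \<psi>1 \<phi>0 \<phi>1) \<longlongrightarrow>
     (- l2_inner \<psi>0 (t_op \<phi>0) + cnj (- l2_inner \<phi>0 (t_op \<psi>0))) / 2 +
     (- l2_inner \<psi>1 (tadj_op \<phi>1) + cnj (- l2_inner \<phi>1 (tadj_op \<psi>1))) / 2) (at_right 0)"
    unfolding t_eps_def
    using assms L2_M0 L2_M1
    by (intro tendsto_intros tendsto_l2_inner_swap tendsto_l2_inner_S_op tendsto_l2_inner_Sadj_op) auto
  also have "(- l2_inner \<psi>0 (t_op \<phi>0) + cnj (- l2_inner \<phi>0 (t_op \<psi>0))) / 2 +
     (- l2_inner \<psi>1 (tadj_op \<phi>1) + cnj (- l2_inner \<phi>1 (tadj_op \<psi>1))) / 2 = t_AB \<psi>0 \<psi>1 \<phi>0 \<phi>1"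
    unfolding t_AB_def by (simp add: l2_inner_commute[of "t_op \<psi>0"] l2_inner_commute[of "tadj_op \<psi>1"]
        diff_divide_distrib add_divide_distrib)
  finally show ?thesis .
qed

end
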